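(* Consider the uncensored delayed-feedback bandit model (see context) with arm $1$ the unique optimal arm and $\Delta_k=\theta_1-\theta_k>0$ for $k\neq1$, and assume there is a constant $c>0$ such that $1-\tau_m\le c/m$ for all integers $m\ge1$. Let $\epsilon\in(0,1)$ and run DelayedUCB (uncensored version) with $\beta_\epsilon(t)=(1+\epsilon)\log t$. Then its expected regret satisfies \[ L(T)\le\frac{1+\epsilon}{1-\epsilon}\log(T)\sum_{k\neq1}\frac{1}{2\Delta_k}+o(\log T), \] where the $o(\log T)$ term (which may depend on $\epsilon$, $c$, $\theta$ and the delay distribution) divided by $\log T$ tends to $0$ as $T\to\infty$.
   Context: Uncensored delayed-feedback bandit model: $K$ arms with unknown conversion rates $\theta_1,\dots,\theta_K\in[0,1]$; a known delay distribution on $\mathbb{N}$ with CDF $\tau_d=\mathbb{P}(D\le d)$. At each round $t$ the learner picks $A_t$ based on past observations; this triggers, conditionally independently given the past, $C_t\sim\mathrm{Bernoulli}(\theta_{A_t})$ and $D_t\sim\tau$. With $X_{s,t}=C_s\mathbf{1}\{D_s\le t-s\}$, at round $t$ the learner observes all $X_{s,t}$, $s\le t$, and receives $Y_t=\sum_{s=1}^tC_s\mathbf{1}\{D_s=t-s\}$. Expected regret $L(T)=\mathbb{E}[r^*(T)-r(T)]$ with $r(T)=\sum_{t\le T}Y_t$ and $r^*(T)$ the reward of the oracle always playing arm $1$. Estimators: $N_k(t)=\sum_{s=1}^{t-1}\mathbf{1}\{A_s=k\}$; $\tilde N_k(t)=\sum_{s=1}^{t-1}\mathbf{1}\{A_s=k\}\tau_{t-s}$;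 $S_k(t)=\sum_{s=1}^{t-1}\mathbf{1}\{A_s=k\}X_{s,t}$; $\hat\theta_k(t)=S_k(t)/\tilde N_k(t)$. DelayedUCB: play each arm once in the first $K$ rounds; for $t>K$ play $A_t\in\arg\max_kU_k(t)$ with $U_k(t)=\hat\theta_k(t)+\sqrt{N_k(t)/\tilde N_k(t)}\sqrt{\beta_\epsilon(t)/(2\tilde N_k(t))}$. *)

theory Defs
  imports "HOL-Probability.Probability"
begin

(* Outcome of the randomness: (coins, delays).
   coins t k  = potential conversion C of arm k at round t (Bernoulli (theta k)),
   delays t   = delay D_t of round t (drawn from the delay distribution). *)
type_synonym outcome = "(nat \<Rightarrow> nat \<Rightarrow> bool) \<times> (nat \<Rightarrow> nat)"

definition tau :: "nat pmf \<Rightarrow> nat \<Rightarrow> real" where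
  "tau Dd d = measure_pmf.prob Dd {..d}"

definition Cval :: "outcome \<Rightarrow> (nat \<Rightarrow> nat) \<Rightarrow> nat \<Rightarrow> real" where
  "Cval \<omega> A s = (if fst \<omega> s (A s) then 1 else 0)"

definition Xobs :: "outcome \<Rightarrow> (nat \<Rightarrow> nat) \<Rightarrow> nat \<Rightarrow> nat \<Rightarrow> real" where
  "Xobs \<omega> A s t = Cval \<omega> A s * (if snd \<omega> s \<le> t - s then 1 else 0)"

definition Yrew :: "outcome \<Rightarrow> (nat \<Rightarrow> nat) \<Rightarrow> nat \<Rightarrow> real" where
  "Yrew \<omega> A t = (\<Sum>s\<in>{1..t}. Cval \<omega> A s * (if snd \<omega> s = t - s then 1 else 0))"

definition reward :: "outcome \<Rightarrow> (nat \<Rightarrow> nat) \<Rightarrow> nat \<Rightarrow> real" where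
  "reward \<omega> A T = (\<Sum>t\<in>{1..T}. Yrew \<omega> A t)"

definition Ncnt :: "(nat \<Rightarrow> nat) \<Rightarrow> nat \<Rightarrow> nat \<Rightarrow> real" where
  "Ncnt A k t = (\<Sum>s\<in>{1..<t}. if A s = k then 1 else 0)"

definition Ntil :: "nat pmf \<Rightarrow> (nat \<Rightarrow> nat) \<Rightarrow> nat \<Rightarrow> nat \<Rightarrow> real" where
  "Ntil Dd A k t = (\<Sum>s\<in>{1..<t}. if A s = k then tau Dd (t - s) else 0)"

definition Scnt :: "outcome \<Rightarrow> (nat \<Rightarrow> nat) \<Rightarrow> nat \<Rightarrow> nat \<Rightarrow> real" where
  "Scnt \<omega> A k t = (\<Sum>s\<in>{1..<t}. if A s = k then Xobs \<omega> A s t else 0)"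

definition theta_hat :: "nat pmf \<Rightarrow> outcome \<Rightarrow> (nat \<Rightarrow> nat) \<Rightarrow> nat \<Rightarrow> nat \<Rightarrow> real" where
  "theta_hat Dd \<omega> A k t = Scnt \<omega> A k t / Ntil Dd A k t"

definition UCB :: "nat pmf \<Rightarrow> (nat \<Rightarrow> real) \<Rightarrow> outcome \<Rightarrow> (nat \<Rightarrow> nat) \<Rightarrow> nat \<Rightarrow> nat \<Rightarrow> real" where
  "UCB Dd \<beta> \<omega> A k t = theta_hat Dd \<omega> A k t
     + sqrt (Ncnt A k t / Ntil Dd A k t) * sqrt (\<beta> t / (2 * Ntil Dd A k t))"

(* Set of admissible arms at round t: the argmax of the indices U_k(t); an arm with
   tilde N_k(t) = 0 is treated as having index +infinity. *)
definition candidates :: "nat \<Rightarrow> nat pmf \<Rightarrow> (nat \<Rightarrow> real) \<Rightarrow> outcome \<Rightarrow> (nat \<Rightarrow> nat) \<Rightarrow> nat \<Rightarrow> nat set" where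
  "candidates K Dd \<beta> \<omega> A t =
     (if \<exists>k\<in>{1..K}. Ntil Dd A k t = 0 then {k\<in>{1..K}. Ntil Dd A k t = 0}
      else {k\<in>{1..K}. \<forall>j\<in>{1..K}. UCB Dd \<beta> \<omega> A j t \<le> UCB Dd \<beta> \<omega> A k t})"

(* Actions of DelayedUCB up to round t (rounds are 1-indexed; A s = 0 for s > t).
   sel is the tie-breaking rule: it gets the round, the past actions, the past
   observations X_{s,t} (s < t) and the argmax set. *)
primrec acts :: "nat \<Rightarrow> nat pmf \<Rightarrow> (nat \<Rightarrow> real)
    \<Rightarrow> (nat \<Rightarrow> (nat \<Rightarrow> nat) \<Rightarrow> (nat \<Rightarrow> real) \<Rightarrow> nat set \<Rightarrow> nat)
    \<Rightarrow> outcome \<Rightarrow> nat \<Rightarrow> (nat \<Rightarrow> nat)" where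
  "acts K Dd \<beta> sel \<omega> 0 = (\<lambda>s. 0)"
| "acts K Dd \<beta> sel \<omega> (Suc t) =
     (let A = acts K Dd \<beta> sel \<omega> t; n = Suc t in
      A(n := (if n \<le> K then n
              else sel n (\<lambda>s. if s < n then A s else 0)
                         (\<lambda>s. if s < n then Xobs \<omega> A s n else 0)
                         (candidates K Dd \<beta> \<omega> A n))))"

definition omega_pmf :: "nat \<Rightarrow> (nat \<Rightarrow> real) \<Rightarrow> nat pmf \<Rightarrow> nat \<Rightarrow> outcome pmf" where
  "omega_pmf K \<theta> Dd T =
     pair_pmf (Pi_pmf {1..T} (\<lambda>_. False) (\<lambda>t. Pi_pmf {1..K} False (\<lambda>k. bernoulli_pmf (\<theta> k))))
              (Pi_pmf {1..T} 0 (\<lambda>_. Dd))"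

definition regret :: "nat \<Rightarrow> (nat \<Rightarrow> real) \<Rightarrow> nat pmf \<Rightarrow> (nat \<Rightarrow> real)
    \<Rightarrow> (nat \<Rightarrow> (nat \<Rightarrow> nat) \<Rightarrow> (nat \<Rightarrow> real) \<Rightarrow> nat set \<Rightarrow> nat) \<Rightarrow> nat \<Rightarrow> real" where
  "regret K \<theta> Dd \<beta> sel T =
     measure_pmf.expectation (omega_pmf K \<theta> Dd T)
       (\<lambda>\<omega>. reward \<omega> (\<lambda>_. 1) T - reward \<omega> (acts K Dd \<beta> sel \<omega> T) T)"

end

(*
  Since the expected loss of round s given the past is at most the gap of the arm played,
  the regret is at most the sum over suboptimal arms k of gap k times the expected number of
  pulls of k.  Each pull of k after the initial rounds either happens while the index of arm 1
  is below theta_1 - delta_k, or while the delay-corrected estimate of theta_k exceeds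
  theta_k + delta_k, or else the exploration bonus of k still exceeds gap k - 2 delta_k; the
  last case bounds the pull count by (1 + eps) ln T / (2 (gap k - 2 delta_k)^2 (1 - eta_k)^2),
  because the tail bound on the delays makes the discounted count at least (1 - eta_k) times
  the true count once k has been pulled often enough.  The first two cases occur only a
  constant number of times in expectation: a Hoeffding-Azuma inequality for sums over
  predictably selected rounds, with a union bound over the pull count, gives probabilities
  that are summable over the round and the count.
*)

theory Submission
  imports Defs
begin

section \<open>The probability model, round by round\<close>

definition round_pmf :: "nat \<Rightarrow> (nat \<Rightarrow> real) \<Rightarrow> nat pmf \<Rightarrow> ((nat \<Rightarrow> bool) \<times> nat) pmf" where
  "round_pmf K \<theta> Dd = pair_pmf (Pi_pmf {1..K} False (\<lambda>k. bernoulli_pmf (\<theta> k))) Dd"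

definition set_round :: "outcome \<Rightarrow> nat \<Rightarrow> (nat \<Rightarrow> bool) \<times> nat \<Rightarrow> outcome" where
  "set_round \<omega> n r = ((fst \<omega>)(n := fst r), (snd \<omega>)(n := snd r))"

lemma omega_pmf_Suc:
  "omega_pmf K \<theta> Dd (Suc T) =
     bind_pmf (omega_pmf K \<theta> Dd T) (\<lambda>\<omega>. map_pmf (set_round \<omega> (Suc T)) (round_pmf K \<theta> Dd))"
proof -
  have I: "{1..Suc T} = insert (Suc T) {1..T}" by auto
  define C where "C = Pi_pmf {1..K} False (\<lambda>k. bernoulli_pmf (\<theta> k))"
  define PC where "PC = Pi_pmf {1..T} (\<lambda>_. False) (\<lambda>t. C)"
  define PD where "PD = Pi_pmf {1..T} 0 (\<lambda>_. Dd)"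
  have "omega_pmf K \<theta> Dd (Suc T) =
     do {c \<leftarrow> C; f \<leftarrow> PC; d \<leftarrow> Dd; g \<leftarrow> PD; return_pmf (f(Suc T := c), g(Suc T := d))}"
    unfolding omega_pmf_def I C_def[symmetric] PC_def PD_def
    by (simp add: Pi_pmf_insert' pair_pmf_def bind_assoc_pmf bind_return_pmf)
  also have "\<dots> = do {f \<leftarrow> PC; g \<leftarrow> PD; c \<leftarrow> C; d \<leftarrow> Dd; return_pmf (f(Suc T := c), g(Suc T := d))}"
    by (subst bind_commute_pmf[of C], rule bind_pmf_cong[OF refl],
        subst bind_commute_pmf[of Dd PD], subst bind_commute_pmf[of C PD]) simp
  also have "\<dots> = bind_pmf (omega_pmf K \<theta> Dd T) (\<lambda>\<omega>. map_pmf (set_round \<omega> (Suc T)) (round_pmf K \<theta> Dd))"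
    unfolding omega_pmf_def round_pmf_def C_def[symmetric] PC_def PD_def
    by (simp add: pair_pmf_def bind_assoc_pmf bind_return_pmf map_pmf_def set_round_def)
  finally show ?thesis .
qed

lemma integrable_bounded_pmf:
  fixes f :: "'a \<Rightarrow> real"
  assumes "\<And>x. \<bar>f x\<bar> \<le> B" shows "integrable (measure_pmf M) f"
  by (rule measure_pmf.integrable_const_bound[where B=B]) (use assms in auto)

lemma expectation_bind_pmf:
  fixes f :: "'b \<Rightarrow> real"
  assumes "\<And>y. \<bar>f y\<bar> \<le> B"
  shows "measure_pmf.expectation (bind_pmf M N) f =
    measure_pmf.expectation M (\<lambda>x. measure_pmf.expectation (N x) f)"
  unfolding measure_pmf_bind
  by (rule integral_bind[where K="count_space UNIV" and B=B and B'=1])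
     (use assms in \<open>auto simp: measure_pmf.emeasure_space_1 prob_space_measure_pmf
        prob_space_imp_subprob_space measure_pmf_in_subprob_space intro: prob_space.finite_measure\<close>)

lemma expectation_omega_pmf_Suc:
  fixes f :: "outcome \<Rightarrow> real"
  assumes "\<And>y. \<bar>f y\<bar> \<le> B"
  shows "measure_pmf.expectation (omega_pmf K \<theta> Dd (Suc T)) f =
    measure_pmf.expectation (omega_pmf K \<theta> Dd T)
      (\<lambda>\<omega>. measure_pmf.expectation (round_pmf K \<theta> Dd) (\<lambda>r. f (set_round \<omega> (Suc T) r)))"
  unfolding omega_pmf_Suc by (subst expectation_bind_pmf[where B=B]) (use assms in auto)

lemma nn_integral_omega_pmf_Suc:
  "nn_integral (omega_pmf K \<theta> Dd (Suc T)) f =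
    nn_integral (omega_pmf K \<theta> Dd T)
      (\<lambda>\<omega>. nn_integral (round_pmf K \<theta> Dd) (\<lambda>r. f (set_round \<omega> (Suc T) r)))"
  unfolding omega_pmf_Suc by simp

lemma expectation_omega_pmf_prefix:
  fixes F :: "outcome \<Rightarrow> real"
  assumes local: "\<And>\<omega> m r. n \<le> m \<Longrightarrow> F (set_round \<omega> (Suc m) r) = F \<omega>"
    and bounded: "\<And>\<omega>. \<bar>F \<omega>\<bar> \<le> B" and "n \<le> T"
  shows "measure_pmf.expectation (omega_pmf K \<theta> Dd T) F = measure_pmf.expectation (omega_pmf K \<theta> Dd n) F"
  using \<open>n \<le> T\<close>
proof (induction T rule: dec_induct)
  case (step m)
  have "measure_pmf.expectation (omega_pmf K \<theta> Dd (Suc m)) F =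
    measure_pmf.expectation (omega_pmf K \<theta> Dd m)
      (\<lambda>\<omega>. measure_pmf.expectation (round_pmf K \<theta> Dd) (\<lambda>r. F (set_round \<omega> (Suc m) r)))"
    by (rule expectation_omega_pmf_Suc[OF bounded])
  also have "\<dots> = measure_pmf.expectation (omega_pmf K \<theta> Dd m) F"
    using step.hyps by (simp add: local)
  finally show ?case using step.IH by simp
qed simp

lemma expectation_card_eq_sum_prob:
  assumes "finite I"
  shows "measure_pmf.expectation M (\<lambda>\<omega>. real (card {t\<in>I. P t \<omega>})) = (\<Sum>t\<in>I. measure_pmf.prob M {\<omega>. P t \<omega>})"
proof -
  have "(\<lambda>\<omega>. real (card {t\<in>I. P t \<omega>})) = (\<lambda>\<omega>. \<Sum>t\<in>I. indicator {\<omega>. P t \<omega>} \<omega>)"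
    using assms by (auto simp: sum.If_cases Int_def indicator_def)
  then show ?thesis
    by (simp add: Bochner_Integration.integral_sum integrable_bounded_pmf[where B=1]
        measure_pmf.emeasure_eq_measure)
qed

lemma expectation_pair_pmf_mult:
  fixes f :: "'a \<Rightarrow> real" and g :: "'b \<Rightarrow> real"
  assumes "\<And>x. \<bar>f x\<bar> \<le> B" "\<And>x. \<bar>g x\<bar> \<le> B"
  shows "measure_pmf.expectation (pair_pmf P Q) (\<lambda>(x,y). f x * g y) =
     measure_pmf.expectation P f * measure_pmf.expectation Q g"
proof -
  have bounded: "\<bar>f x * g y\<bar> \<le> B * B" for x y
    by (auto simp: abs_mult intro!: mult_mono' assms)
  have "measure_pmf.expectation (pair_pmf P Q) (\<lambda>(x,y). f x * g y) =
     measure_pmf.expectation P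
       (\<lambda>x. measure_pmf.expectation (bind_pmf Q (\<lambda>y. return_pmf (x,y))) (\<lambda>(x,y). f x * g y))"
    unfolding pair_pmf_def by (rule expectation_bind_pmf[where B="B*B"]) (auto simp: bounded)
  also have "\<dots> = measure_pmf.expectation P (\<lambda>x. measure_pmf.expectation Q (\<lambda>y. f x * g y))"
    by (intro Bochner_Integration.integral_cong refl, subst expectation_bind_pmf[where B="B*B"])
       (auto simp: bounded)
  finally show ?thesis by simp
qed

lemma expectation_Pi_pmf_coin:
  fixes K k :: nat
  assumes "k \<in> {1..K}" "0 \<le> \<theta> k" "\<theta> k \<le> 1"
  shows "measure_pmf.expectation (Pi_pmf {1..K} False (\<lambda>k. bernoulli_pmf (\<theta> k)))
      (\<lambda>h. if h k then 1 else 0 :: real) = \<theta> k"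
proof -
  have "measure_pmf.expectation (Pi_pmf {1..K} False (\<lambda>k. bernoulli_pmf (\<theta> k)))
      (\<lambda>h. if h k then 1 else 0 :: real) =
    measure_pmf.expectation (map_pmf (\<lambda>h. h k) (Pi_pmf {1..K} False (\<lambda>k. bernoulli_pmf (\<theta> k))))
      (\<lambda>b. if b then 1 else 0)"
    by simp
  also have "\<dots> = \<theta> k"
    using assms by (subst Pi_pmf_component) simp_all
  finally show ?thesis .
qed

lemma expectation_round_coin:
  assumes "k \<in> {1..K}" "0 \<le> \<theta> k" "\<theta> k \<le> 1"
  shows "measure_pmf.expectation (round_pmf K \<theta> Dd) (\<lambda>r. if fst r k then 1 else 0 :: real) = \<theta> k"
  unfolding round_pmf_def
  by (subst expectation_pair_pmf_fst[where f="\<lambda>h. if h k then 1 else 0 :: real"])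
     (rule expectation_Pi_pmf_coin[of k K \<theta>, OF assms])

lemma expectation_round_coin_delay:
  assumes "k \<in> {1..K}" "0 \<le> \<theta> k" "\<theta> k \<le> 1"
  shows "measure_pmf.expectation (round_pmf K \<theta> Dd)
      (\<lambda>r. (if fst r k then 1 else 0) * (if snd r \<le> d then 1 else 0) :: real) = \<theta> k * tau Dd d"
proof -
  have "measure_pmf.expectation (round_pmf K \<theta> Dd)
      (\<lambda>r. (if fst r k then 1 else 0) * (if snd r \<le> d then 1 else 0) :: real) =
    measure_pmf.expectation (Pi_pmf {1..K} False (\<lambda>k. bernoulli_pmf (\<theta> k))) (\<lambda>h. if h k then 1 else 0)
      * measure_pmf.expectation Dd (indicator {..d})"
    unfolding round_pmf_def
    by (subst expectation_pair_pmf_mult[where B=1, symmetric])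
       (auto simp: case_prod_beta' indicator_def intro!: Bochner_Integration.integral_cong)
  also have "\<dots> = \<theta> k * tau Dd d"
    unfolding expectation_Pi_pmf_coin[of k K \<theta>, OF assms]
    by (simp add: tau_def measure_pmf.emeasure_eq_measure)
  finally show ?thesis .
qed

section \<open>A Hoeffding--Azuma inequality for predictably selected rounds\<close>

text \<open>The selection \<open>b s\<close> of round \<open>s\<close> may depend only on the rounds before \<open>s\<close>, so the selected
  centred summands form a martingale difference sequence.\<close>

definition dev_sum ::
    "(nat \<Rightarrow> outcome \<Rightarrow> bool) \<Rightarrow> (nat \<Rightarrow> (nat \<Rightarrow> bool) \<times> nat \<Rightarrow> real) \<Rightarrow> (nat \<Rightarrow> real) \<Rightarrow> nat \<Rightarrow> outcome \<Rightarrow> real"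
  where "dev_sum b \<phi> \<mu> T \<omega> = (\<Sum>s\<in>{1..T}. if b s \<omega> then \<phi> s (fst \<omega> s, snd \<omega> s) - \<mu> s else 0)"

definition active_count :: "(nat \<Rightarrow> outcome \<Rightarrow> bool) \<Rightarrow> nat \<Rightarrow> outcome \<Rightarrow> real" where
  "active_count b T \<omega> = (\<Sum>s\<in>{1..T}. if b s \<omega> then 1 else 0)"

lemma active_count_eq_card: "active_count b T \<omega> = real (card {s\<in>{1..T}. b s \<omega>})"
  unfolding active_count_def by (simp add: sum.If_cases Int_def)

context
  fixes b :: "nat \<Rightarrow> outcome \<Rightarrow> bool" and \<phi> :: "nat \<Rightarrow> (nat \<Rightarrow> bool) \<times> nat \<Rightarrow> real"
    and \<mu> :: "nat \<Rightarrow> real" and K :: nat and \<theta> :: "nat \<Rightarrow> real" and Dd :: "nat pmf"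
  assumes \<phi>_bounds: "\<And>s r. 0 \<le> \<phi> s r \<and> \<phi> s r \<le> 1"
    and predictable: "\<And>s \<omega> n r. s \<le> n \<Longrightarrow> b s (set_round \<omega> n r) = b s \<omega>"
    and \<mu>_eq: "\<And>s. \<mu> s = measure_pmf.expectation (round_pmf K \<theta> Dd) (\<phi> s)"
begin

lemma dev_sum_set_round_Suc:
  "dev_sum b \<phi> \<mu> (Suc T) (set_round \<omega> (Suc T) r) =
     dev_sum b \<phi> \<mu> T \<omega> + (if b (Suc T) \<omega> then \<phi> (Suc T) r - \<mu> (Suc T) else 0)"
proof -
  have "dev_sum b \<phi> \<mu> T (set_round \<omega> (Suc T) r) = dev_sum b \<phi> \<mu> T \<omega>"
    unfolding dev_sum_def
    by (intro sum.cong refl) (simp add: predictable[unfolded set_round_def] set_round_def)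
  then show ?thesis
    unfolding dev_sum_def by (simp add: predictable[unfolded set_round_def] set_round_def)
qed

lemma active_count_set_round_Suc:
  "active_count b (Suc T) (set_round \<omega> (Suc T) r) = active_count b T \<omega> + (if b (Suc T) \<omega> then 1 else 0)"
proof -
  have "active_count b T (set_round \<omega> (Suc T) r) = active_count b T \<omega>"
    unfolding active_count_def by (intro sum.cong refl) (auto simp: predictable)
  then show ?thesis unfolding active_count_def by (simp add: predictable)
qed

lemma nn_integral_exp_round_le_1:
  assumes "l > 0"
  shows "nn_integral (round_pmf K \<theta> Dd)
      (\<lambda>r. ennreal (exp (if b' then l * (\<phi> s r - \<mu> s) - l\<^sup>2 / 8 else 0))) \<le> 1"
proof (cases b')
  case True
  interpret interval_bounded_random_variable "measure_pmf (round_pmf K \<theta> Dd)" "\<phi> s" 0 1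
    by unfold_locales (use \<phi>_bounds in auto)
  have "nn_integral (round_pmf K \<theta> Dd) (\<lambda>r. ennreal (exp (l * (\<phi> s r - \<mu> s) - l\<^sup>2 / 8)))
     = nn_integral (round_pmf K \<theta> Dd) (\<lambda>r. ennreal (exp (l * (\<phi> s r - \<mu> s)))) * ennreal (exp (- (l\<^sup>2 / 8)))"
    by (subst nn_integral_multc[symmetric]) (auto intro!: nn_integral_cong simp flip: ennreal_mult'' exp_add)
  also have "\<dots> \<le> ennreal (exp (l\<^sup>2 / 8)) * ennreal (exp (- (l\<^sup>2 / 8)))"
    using Hoeffdings_lemma_nn_integral[OF assms] \<mu>_eq by (intro mult_right_mono) auto
  also have "\<dots> = 1" by (simp flip: ennreal_mult'' exp_add)
  finally show ?thesis using True by simp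
qed (simp add: measure_pmf.emeasure_space_1)

text \<open>Hoeffding's lemma, applied round by round, makes this exponential a supermartingale.\<close>

lemma nn_integral_exp_dev_sum_le_1:
  assumes "l > 0"
  shows "nn_integral (omega_pmf K \<theta> Dd T)
    (\<lambda>\<omega>. ennreal (exp (l * dev_sum b \<phi> \<mu> T \<omega> - l\<^sup>2 / 8 * active_count b T \<omega>))) \<le> 1"
proof (induction T)
  case 0
  then show ?case by (simp add: dev_sum_def active_count_def measure_pmf.emeasure_space_1)
next
  case (Suc T)
  define \<Phi> where "\<Phi> \<omega> = exp (l * dev_sum b \<phi> \<mu> T \<omega> - l\<^sup>2 / 8 * active_count b T \<omega>)" for \<omega>
  define \<Psi> where "\<Psi> \<omega> r = exp (if b (Suc T) \<omega> then l * (\<phi> (Suc T) r - \<mu> (Suc T)) - l\<^sup>2 / 8 else 0)" for \<omega> r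
  have \<Phi>_nonneg: "\<Phi> \<omega> \<ge> 0" and \<Psi>_nonneg: "\<Psi> \<omega> r \<ge> 0" for \<omega> r
    by (simp_all add: \<Phi>_def \<Psi>_def)
  have step: "exp (l * dev_sum b \<phi> \<mu> (Suc T) (set_round \<omega> (Suc T) r)
       - l\<^sup>2 / 8 * active_count b (Suc T) (set_round \<omega> (Suc T) r)) = \<Phi> \<omega> * \<Psi> \<omega> r" for \<omega> r
    unfolding dev_sum_set_round_Suc active_count_set_round_Suc \<Phi>_def \<Psi>_def
    by (auto simp: exp_add[symmetric] algebra_simps)
  have "nn_integral (omega_pmf K \<theta> Dd (Suc T))
      (\<lambda>\<omega>. ennreal (exp (l * dev_sum b \<phi> \<mu> (Suc T) \<omega> - l\<^sup>2 / 8 * active_count b (Suc T) \<omega>)))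
    = nn_integral (omega_pmf K \<theta> Dd T)
        (\<lambda>\<omega>. ennreal (\<Phi> \<omega>) * nn_integral (round_pmf K \<theta> Dd) (\<lambda>r. ennreal (\<Psi> \<omega> r)))"
    unfolding nn_integral_omega_pmf_Suc step
    by (intro nn_integral_cong) (simp add: ennreal_mult \<Phi>_nonneg \<Psi>_nonneg nn_integral_cmult)
  also have "\<dots> \<le> nn_integral (omega_pmf K \<theta> Dd T) (\<lambda>\<omega>. ennreal (\<Phi> \<omega>) * 1)"
    unfolding \<Psi>_def by (intro nn_integral_mono mult_left_mono nn_integral_exp_round_le_1 assms) auto
  also have "\<dots> \<le> 1" using Suc.IH by (simp add: \<Phi>_def)
  finally show ?case .
qed

lemma dev_sum_tail_bound:
  assumes "x > 0" "n > 0" and active: "\<And>\<omega>. active_count b T \<omega> \<le> n"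
  shows "measure_pmf.prob (omega_pmf K \<theta> Dd T) {\<omega>. dev_sum b \<phi> \<mu> T \<omega> \<ge> x} \<le> exp (- 2 * x\<^sup>2 / n)"
proof -
  define l where "l = 4 * x / n"
  have l: "l > 0" using assms by (simp add: l_def)
  define c where "c = exp (- l * x + l\<^sup>2 / 8 * n)"
  have c: "c = exp (- 2 * x\<^sup>2 / n)"
    unfolding c_def l_def using assms by (simp add: power2_eq_square field_simps)
  let ?M = "omega_pmf K \<theta> Dd T"
  let ?E = "\<lambda>\<omega>. exp (l * dev_sum b \<phi> \<mu> T \<omega> - l\<^sup>2 / 8 * active_count b T \<omega>)"
  have markov: "indicator {\<omega>. dev_sum b \<phi> \<mu> T \<omega> \<ge> x} \<omega> \<le> ennreal (?E \<omega>) * ennreal c" for \<omega>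
  proof (cases "dev_sum b \<phi> \<mu> T \<omega> \<ge> x")
    case True
    have "l * x \<le> l * dev_sum b \<phi> \<mu> T \<omega>" using True l by (intro mult_left_mono) auto
    moreover have "l\<^sup>2 / 8 * active_count b T \<omega> \<le> l\<^sup>2 / 8 * n" using active by (intro mult_left_mono) auto
    ultimately have "0 \<le> (l * dev_sum b \<phi> \<mu> T \<omega> - l\<^sup>2 / 8 * active_count b T \<omega>) + (- l * x + l\<^sup>2 / 8 * n)"
      by simp
    then have "1 \<le> ?E \<omega> * c"
      unfolding c_def exp_add[symmetric] by simp
    then show ?thesis using True by (simp add: ennreal_mult''[symmetric] c_def)
  qed simp
  have "emeasure ?M {\<omega>. dev_sum b \<phi> \<mu> T \<omega> \<ge> x} = nn_integral ?M (indicator {\<omega>. dev_sum b \<phi> \<mu> T \<omega> \<ge> x})"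
    by simp
  also have "\<dots> \<le> nn_integral ?M (\<lambda>\<omega>. ennreal (?E \<omega>) * ennreal c)"
    by (intro nn_integral_mono markov)
  also have "\<dots> = nn_integral ?M (\<lambda>\<omega>. ennreal (?E \<omega>)) * ennreal c"
    by (rule nn_integral_multc) simp
  also have "\<dots> \<le> ennreal c"
    using mult_right_mono[OF nn_integral_exp_dev_sum_le_1[OF l], of "ennreal c"] by simp
  finally show ?thesis unfolding c[symmetric]
    by (simp add: measure_pmf.emeasure_eq_measure c_def)
qed

end

section \<open>DelayedUCB depends only on the past\<close>

lemma Xobs_set_round: "s \<noteq> n \<Longrightarrow> Xobs (set_round \<omega> n r) A s t = Xobs \<omega> A s t"
  by (simp add: Xobs_def Cval_def set_round_def)

lemma Scnt_set_round: "t \<le> n \<Longrightarrow> Scnt (set_round \<omega> n r) A k t = Scnt \<omega> A k t"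
  unfolding Scnt_def by (intro sum.cong refl) (auto simp: Xobs_set_round)

lemma candidates_set_round: "t \<le> n \<Longrightarrow> candidates K Dd \<beta> (set_round \<omega> n r) A t = candidates K Dd \<beta> \<omega> A t"
  unfolding candidates_def UCB_def theta_hat_def by (simp add: Scnt_set_round)

lemma acts_set_round: "t \<le> n \<Longrightarrow> acts K Dd \<beta> sel (set_round \<omega> n r) t = acts K Dd \<beta> sel \<omega> t"
proof (induction t)
  case 0 then show ?case by simp
next
  case (Suc t)
  then have IH: "acts K Dd \<beta> sel (set_round \<omega> n r) t = acts K Dd \<beta> sel \<omega> t" by simp
  have X: "(\<lambda>s. if s < Suc t then Xobs (set_round \<omega> n r) (acts K Dd \<beta> sel \<omega> t) s (Suc t) else 0)
     = (\<lambda>s. if s < Suc t then Xobs \<omega> (acts K Dd \<beta> sel \<omega> t) s (Suc t) else 0)"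
    using Suc.prems by (auto simp: Xobs_set_round)
  show ?case by (simp only: acts.simps Let_def IH X candidates_set_round[OF Suc.prems])
qed

lemma acts_eq_diag: "acts K Dd \<beta> sel \<omega> t s = (if s \<le> t then acts K Dd \<beta> sel \<omega> s s else 0)"
proof (induction t arbitrary: s)
  case 0 then show ?case by simp
next
  case (Suc t)
  show ?case
  proof (cases "s = Suc t")
    case True then show ?thesis by simp
  next
    case False
    have "acts K Dd \<beta> sel \<omega> (Suc t) s = acts K Dd \<beta> sel \<omega> t s" using False by (simp add: Let_def)
    also have "\<dots> = (if s \<le> t then acts K Dd \<beta> sel \<omega> s s else 0)" by (rule Suc.IH)
    finally show ?thesis using False by auto
  qed
qed

lemma Ncnt_cong: "(\<And>s. s < t \<Longrightarrow> A s = A' s) \<Longrightarrow> Ncnt A k t = Ncnt A' k t"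
  unfolding Ncnt_def by (intro sum.cong refl) auto

lemma Ntil_cong: "(\<And>s. s < t \<Longrightarrow> A s = A' s) \<Longrightarrow> Ntil Dd A k t = Ntil Dd A' k t"
  unfolding Ntil_def by (intro sum.cong refl) auto

lemma Scnt_cong: "(\<And>s. s < t \<Longrightarrow> A s = A' s) \<Longrightarrow> Scnt \<omega> A k t = Scnt \<omega> A' k t"
  unfolding Scnt_def Xobs_def Cval_def by (intro sum.cong refl) auto

lemma candidates_cong: "(\<And>s. s < t \<Longrightarrow> A s = A' s) \<Longrightarrow> candidates K Dd \<beta> \<omega> A t = candidates K Dd \<beta> \<omega> A' t"
  unfolding candidates_def UCB_def theta_hat_def
  by (simp add: Ncnt_cong[of t A A'] Ntil_cong[of t A A'] Scnt_cong[of t A A'])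

lemma candidates_nonempty:
  assumes "K \<ge> 1" shows "candidates K Dd \<beta> \<omega> A t \<noteq> {}"
proof (cases "\<exists>k\<in>{1..K}. Ntil Dd A k t = 0")
  case True then show ?thesis unfolding candidates_def by auto
next
  case False
  let ?f = "\<lambda>k. UCB Dd \<beta> \<omega> A k t"
  have fin: "finite (?f ` {1..K})" and ne: "?f ` {1..K} \<noteq> {}" using assms by auto
  obtain x where x: "x \<in> {1..K}" "?f x = Max (?f ` {1..K})" using Max_in[OF fin ne] by auto
  have "\<forall>j\<in>{1..K}. ?f j \<le> ?f x" using x(2) Max_ge[OF fin] by auto
  then show ?thesis using False x(1) unfolding candidates_def by auto
qed

lemma candidates_subset: "candidates K Dd \<beta> \<omega> A t \<subseteq> {1..K}"
  unfolding candidates_def by auto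

lemma acts_initial_round:
  assumes "1 \<le> t" "t \<le> K"
  shows "acts K Dd \<beta> sel \<omega> t t = t"
  using assms by (cases t) (auto simp: Let_def)

lemma acts_in_candidates:
  assumes "K < t" "t \<le> T" "K \<ge> 1" and sel: "\<forall>t H X S. S \<noteq> {} \<longrightarrow> sel t H X S \<in> S"
  shows "acts K Dd \<beta> sel \<omega> T t \<in> candidates K Dd \<beta> \<omega> (acts K Dd \<beta> sel \<omega> T) t"
proof -
  obtain t' where t': "t = Suc t'" using assms by (cases t) auto
  have cg: "candidates K Dd \<beta> \<omega> (acts K Dd \<beta> sel \<omega> t') t = candidates K Dd \<beta> \<omega> (acts K Dd \<beta> sel \<omega> T) t"
    by (rule candidates_cong) (use assms t' in \<open>auto simp: acts_eq_diag[of _ _ _ _ _ T] acts_eq_diag[of _ _ _ _ _ t']\<close>)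
  have "acts K Dd \<beta> sel \<omega> T t = acts K Dd \<beta> sel \<omega> t t" using assms by (subst acts_eq_diag) auto
  also have "\<dots> \<in> candidates K Dd \<beta> \<omega> (acts K Dd \<beta> sel \<omega> t') t"
    using assms t' sel candidates_nonempty[OF assms(3)] by (auto simp: Let_def)
  finally show ?thesis using cg by simp
qed

lemma acts_in_arms:
  assumes "1 \<le> t" "t \<le> T" "K \<ge> 1" and sel: "\<forall>t H X S. S \<noteq> {} \<longrightarrow> sel t H X S \<in> S"
  shows "acts K Dd \<beta> sel \<omega> T t \<in> {1..K}"
proof (cases "t \<le> K")
  case True
  then show ?thesis using assms acts_eq_diag[of K Dd \<beta> sel \<omega> T t] acts_initial_round[of t K] by auto
next
  case False
  then show ?thesis using acts_in_candidates[OF _ assms(2-4)] candidates_subset by fastforce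
qed

section \<open>Pull counts and delay-discounted pull counts\<close>

definition pulls :: "(nat \<Rightarrow> nat) \<Rightarrow> nat \<Rightarrow> nat \<Rightarrow> nat" where
  "pulls A k t = card {s\<in>{1..<t}. A s = k}"

lemma Int_Collect_atLeastLessThan: "{a..<b} \<inter> {s. P s} = {s\<in>{a..<b}. P s}"
  by auto

lemma Ncnt_eq_pulls: "Ncnt A k t = real (pulls A k t)"
  unfolding Ncnt_def pulls_def by (simp add: sum.If_cases Int_Collect_atLeastLessThan)

lemma pulls_cong: "(\<And>s. s < t \<Longrightarrow> A s = A' s) \<Longrightarrow> pulls A k t = pulls A' k t"
  unfolding pulls_def by (intro arg_cong[where f=card]) auto

lemma pulls_mono: "s \<le> s' \<Longrightarrow> pulls A k s \<le> pulls A k s'"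
  unfolding pulls_def by (intro card_mono) auto

lemma pulls_strict_mono: assumes "1 \<le> s" "s < s'" "A s = k" shows "pulls A k s < pulls A k s'"
proof -
  have "{s''\<in>{1..<s}. A s'' = k} \<subset> {s''\<in>{1..<s'}. A s'' = k}" using assms by auto
  then show ?thesis unfolding pulls_def by (intro psubset_card_mono) auto
qed

lemma pulls_le: "pulls A k t \<le> t - 1"
proof -
  have "pulls A k t \<le> card {1..<t}" unfolding pulls_def by (intro card_mono) auto
  then show ?thesis by simp
qed

lemma rounds_pulls_below_eq:
  assumes "t \<le> T"
  shows "{s\<in>{1..T}. A s = k \<and> pulls A k s < pulls A k t} = {s\<in>{1..<t}. A s = k}"
proof (intro set_eqI iffI)
  fix s assume s: "s \<in> {s\<in>{1..T}. A s = k \<and> pulls A k s < pulls A k t}"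
  have "s < t"
  proof (rule ccontr)
    assume "\<not> s < t"
    then have "pulls A k t \<le> pulls A k s" by (intro pulls_mono) simp
    with s show False by simp
  qed
  then show "s \<in> {s\<in>{1..<t}. A s = k}" using s by simp
next
  fix s assume "s \<in> {s\<in>{1..<t}. A s = k}"
  then show "s \<in> {s\<in>{1..T}. A s = k \<and> pulls A k s < pulls A k t}"
    using pulls_strict_mono[of s t A k] assms by auto
qed

text \<open>The pull count of \<open>k\<close> increases strictly along the pulls of \<open>k\<close>.\<close>

lemma card_pulls_below_le: "card {s\<in>{1..T}. A s = k \<and> pulls A k s < m} \<le> m"
proof -
  let ?Q = "{s\<in>{1..T}. A s = k \<and> pulls A k s < m}"
  have "inj_on (pulls A k) ?Q"
  proof (rule inj_onI)
    fix x y assume "x \<in> ?Q" "y \<in> ?Q" "pulls A k x = pulls A k y"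
    then show "x = y" using pulls_strict_mono[of x y A k] pulls_strict_mono[of y x A k]
      by (cases x y rule: linorder_cases) auto
  qed
  moreover have "pulls A k ` ?Q \<subseteq> {..<m}" by auto
  ultimately have "card ?Q \<le> card {..<m}" by (intro card_inj_on_le) auto
  then show ?thesis by simp
qed

lemma card_pulls_below_real_le:
  assumes "0 \<le> L"
  shows "real (card {s\<in>{1..T}. A s = k \<and> real (pulls A k s) < L}) \<le> L + 1"
proof -
  have "n < nat \<lceil>L\<rceil>" if "real n < L" for n :: nat
  proof -
    have "int n < \<lceil>L\<rceil>" using that by (simp add: less_ceiling_iff)
    then show ?thesis by simp
  qed
  then have "{s\<in>{1..T}. A s = k \<and> real (pulls A k s) < L} \<subseteq> {s\<in>{1..T}. A s = k \<and> pulls A k s < nat \<lceil>L\<rceil>}"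
    by auto
  then have "card {s\<in>{1..T}. A s = k \<and> real (pulls A k s) < L}
      \<le> card {s\<in>{1..T}. A s = k \<and> pulls A k s < nat \<lceil>L\<rceil>}"
    by (intro card_mono) auto
  also have "\<dots> \<le> nat \<lceil>L\<rceil>"
    by (rule card_pulls_below_le)
  finally have "card {s\<in>{1..T}. A s = k \<and> real (pulls A k s) < L} \<le> nat \<lceil>L\<rceil>" .
  then show ?thesis using assms by linarith
qed

lemma tau_nonneg: "0 \<le> tau Dd d"
  by (simp add: tau_def)

lemma tau_le_1: "tau Dd d \<le> 1"
  by (simp add: tau_def)

lemma Ntil_nonneg: "Ntil Dd A k t \<ge> 0"
  unfolding Ntil_def by (intro sum_nonneg) (simp add: tau_nonneg)

lemma card_recent_rounds_le:
  assumes "P \<subseteq> {1..<t}" "M \<ge> 0"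
  shows "real (card {s\<in>P. real (t - s) \<le> M}) \<le> M"
proof -
  have "inj_on (\<lambda>s. t - s) {s\<in>P. real (t - s) \<le> M}"
  proof (rule inj_onI)
    fix x y assume "x \<in> {s\<in>P. real (t - s) \<le> M}" "y \<in> {s\<in>P. real (t - s) \<le> M}" "t - x = t - y"
    moreover have "x < t" "y < t" using calculation(1,2) assms(1) by auto
    ultimately show "x = y" by arith
  qed
  moreover have "(\<lambda>s. t - s) ` {s\<in>P. real (t - s) \<le> M} \<subseteq> {1..nat \<lfloor>M\<rfloor>}"
  proof
    fix x assume "x \<in> (\<lambda>s. t - s) ` {s\<in>P. real (t - s) \<le> M}"
    then obtain s where "s \<in> P" "real (t - s) \<le> M" "x = t - s" by auto
    moreover have "s < t" using \<open>s \<in> P\<close> assms(1) by auto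
    ultimately show "x \<in> {1..nat \<lfloor>M\<rfloor>}" by (simp add: le_nat_floor)
  qed
  ultimately have "card {s\<in>P. real (t - s) \<le> M} \<le> nat \<lfloor>M\<rfloor>"
    using card_inj_on_le[of _ _ "{1..nat \<lfloor>M\<rfloor>}"] by fastforce
  then show ?thesis using assms(2) by linarith
qed

text \<open>Under the tail bound \<open>1 - \<tau>\<^sub>m \<le> c/m\<close>, the rounds at distance at most \<open>M\<close> contribute at most
  \<open>M\<close> to the deficit, and every older round at most \<open>c/M\<close>.\<close>

lemma sum_delay_deficit_le:
  fixes c M :: real
  assumes tail: "\<forall>m::nat. m \<ge> 1 \<longrightarrow> 1 - tau Dd m \<le> c / real m"
    and "M > 0" "c > 0" and P: "P \<subseteq> {1..<t}"
  shows "(\<Sum>s\<in>P. 1 - tau Dd (t - s)) \<le> M + real (card P) * c / M"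
proof -
  have fin: "finite P" using P finite_subset by blast
  let ?P1 = "{s\<in>P. real (t - s) \<le> M}" and ?P2 = "{s\<in>P. \<not> real (t - s) \<le> M}"
  have "(\<Sum>s\<in>P. 1 - tau Dd (t - s)) = (\<Sum>s\<in>?P1 \<union> ?P2. 1 - tau Dd (t - s))"
    by (rule sum.cong) auto
  also have "\<dots> = (\<Sum>s\<in>?P1. 1 - tau Dd (t - s)) + (\<Sum>s\<in>?P2. 1 - tau Dd (t - s))"
    using fin by (intro sum.union_disjoint) auto
  also have "(\<Sum>s\<in>?P1. 1 - tau Dd (t - s)) \<le> real (card ?P1)"
    using sum_mono[of ?P1 "\<lambda>s. 1 - tau Dd (t - s)" "\<lambda>_. 1"] by (simp add: tau_nonneg)
  also have "\<dots> \<le> M"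
    using card_recent_rounds_le[OF P] \<open>M > 0\<close> by simp
  also have "(\<Sum>s\<in>?P2. 1 - tau Dd (t - s)) \<le> (\<Sum>s\<in>?P2. c / M)"
  proof (intro sum_mono)
    fix s assume "s \<in> ?P2"
    then have "s \<in> P" "\<not> real (t - s) \<le> M" by auto
    moreover from \<open>s \<in> P\<close> have "s < t" using P by auto
    ultimately have "t - s \<ge> 1" "real (t - s) > M" by auto
    then have "1 - tau Dd (t - s) \<le> c / real (t - s)" using tail by auto
    also have "\<dots> \<le> c / M" using \<open>real (t - s) > M\<close> \<open>M > 0\<close> \<open>c > 0\<close> by (intro divide_left_mono) auto
    finally show "1 - tau Dd (t - s) \<le> c / M" .
  qed
  also have "\<dots> \<le> real (card P) * c / M"
  proof -
    have "card ?P2 \<le> card P" using fin by (intro card_mono) auto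
    then show ?thesis using \<open>M > 0\<close> \<open>c > 0\<close> by (simp add: divide_right_mono mult_right_mono)
  qed
  finally show ?thesis by simp
qed

lemma Ntil_ge:
  fixes c M :: real
  assumes tail: "\<forall>m::nat. m \<ge> 1 \<longrightarrow> 1 - tau Dd m \<le> c / real m"
    and "M > 0" "c > 0"
  shows "Ntil Dd A k t \<ge> real (pulls A k t) - M - real (pulls A k t) * c / M"
proof -
  let ?P = "{s\<in>{1..<t}. A s = k}"
  have "Ntil Dd A k t = (\<Sum>s\<in>?P. tau Dd (t - s))"
    unfolding Ntil_def by (simp add: sum.If_cases Int_Collect_atLeastLessThan)
  also have "\<dots> = real (pulls A k t) - (\<Sum>s\<in>?P. 1 - tau Dd (t - s))"
    by (simp add: sum_subtractf pulls_def)
  moreover have "(\<Sum>s\<in>?P. 1 - tau Dd (t - s)) \<le> M + real (card ?P) * c / M"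
    by (rule sum_delay_deficit_le[OF tail \<open>M > 0\<close> \<open>c > 0\<close>]) auto
  ultimately show ?thesis by (simp add: pulls_def)
qed

lemma sqrt_bonus_eq:
  assumes "N > 0" "b \<ge> 0"
  shows "sqrt (n / N) * sqrt (b / (2 * N)) = sqrt (n * b / 2) / N"
proof -
  have "sqrt (n / N) * sqrt (b / (2 * N)) = sqrt (n * b / 2 / N\<^sup>2)"
    unfolding real_sqrt_mult[symmetric] using assms by (simp add: power2_eq_square field_simps)
  also have "\<dots> = sqrt (n * b / 2) / N"
    by (subst real_sqrt_divide) (use assms in simp)
  finally show ?thesis .
qed

lemma pulls_lt_of_bonus_gt:
  fixes n N b g q :: real
  assumes bonus: "sqrt (n * b / 2) / N > g" and "g > 0" "q > 0" "n > 0" "b \<ge> 0" and N: "N \<ge> q * n"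
  shows "n < b / (2 * (g\<^sup>2 * q\<^sup>2))"
proof -
  have "0 < q * n" using assms(3,4) by simp
  then have "0 < N" using N by linarith
  have "g * (q * n) \<le> g * N" using N \<open>g > 0\<close> by (intro mult_left_mono) auto
  also have "\<dots> < sqrt (n * b / 2)" using bonus \<open>0 < N\<close> by (simp add: less_divide_eq)
  finally have "(g * (q * n))\<^sup>2 < (sqrt (n * b / 2))\<^sup>2"
    using \<open>g > 0\<close> \<open>0 < q * n\<close> by (intro power_strict_mono) auto
  then have "(g * (q * n))\<^sup>2 < n * b / 2"
    using assms(4,5) by simp
  then have "n * (2 * (g\<^sup>2 * q\<^sup>2)) * n < b * n"
    by (simp add: power2_eq_square algebra_simps)
  then have "n * (2 * (g\<^sup>2 * q\<^sup>2)) < b"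
    using \<open>n > 0\<close> by (simp add: algebra_simps)
  then show ?thesis
    using assms(2,3) by (simp add: pos_less_divide_eq mult.commute)
qed

locale bandit =
  fixes K :: nat and \<theta> :: "nat \<Rightarrow> real" and Dd :: "nat pmf" and c \<epsilon> :: real
    and sel :: "nat \<Rightarrow> (nat \<Rightarrow> nat) \<Rightarrow> (nat \<Rightarrow> real) \<Rightarrow> nat set \<Rightarrow> nat"
  assumes K_pos: "K \<ge> 1"
    and theta_bounds: "\<forall>k\<in>{1..K}. 0 \<le> \<theta> k \<and> \<theta> k \<le> 1"
    and theta_1_max: "\<forall>k\<in>{2..K}. \<theta> k < \<theta> 1"
    and c_pos: "c > 0"
    and tail: "\<forall>m::nat. m \<ge> 1 \<longrightarrow> 1 - tau Dd m \<le> c / real m"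
    and eps_pos: "0 < \<epsilon>" and eps_lt_1: "\<epsilon> < 1"
    and sel_in: "\<forall>t H X S. S \<noteq> {} \<longrightarrow> sel t H X S \<in> S"
begin

abbreviation \<beta> :: "nat \<Rightarrow> real" where "\<beta> \<equiv> (\<lambda>t. (1 + \<epsilon>) * ln (real t))"

abbreviation played :: "outcome \<Rightarrow> nat \<Rightarrow> nat \<Rightarrow> nat" where "played \<omega> T \<equiv> acts K Dd \<beta> sel \<omega> T"

text \<open>A round in which a suboptimal arm \<open>k\<close> is played is charged to arm 1 if its index is below
  \<open>\<theta>\<^sub>1 - \<delta>\<^sub>k\<close>, to arm \<open>k\<close> if its estimate exceeds \<open>\<theta>\<^sub>k + \<delta>\<^sub>k\<close>, and otherwise bounds the
  pull count of \<open>k\<close>; here \<open>\<delta>\<^sub>k\<close> is \<open>margin k\<close>.  Once \<open>k\<close> has been pulled \<open>pulls_min k\<close>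
  times, the delays discount at most the fraction \<open>\<eta>\<^sub>k = delay_loss k\<close> of its pulls.  Both are
  proportional to \<open>\<epsilon> \<Delta>\<^sub>k\<close> so that \<open>log_coeff k\<close> is at most \<open>(1 + \<epsilon>)/((1 - \<epsilon>) 2\<Delta>\<^sub>k\<^sup>2)\<close>.\<close>

definition gap :: "nat \<Rightarrow> real" where "gap k = \<theta> 1 - \<theta> k"
definition margin :: "nat \<Rightarrow> real" where "margin k = \<epsilon> * gap k / 8"
definition delay_loss :: "nat \<Rightarrow> real" where "delay_loss k = \<epsilon> * gap k / 32"
definition pulls_min :: "nat \<Rightarrow> real" where "pulls_min k = 4 * c / (delay_loss k)\<^sup>2"
definition log_coeff :: "nat \<Rightarrow> real" where "log_coeff k = (1 + \<epsilon>) / (2 * (gap k - 2 * margin k)\<^sup>2 * (1 - delay_loss k)\<^sup>2)"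

lemma theta1_bounds: "0 \<le> \<theta> 1" "\<theta> 1 \<le> 1" using theta_bounds K_pos by auto

lemma arm_params:
  assumes k: "k \<in> {2..K}"
  shows "0 < gap k" "gap k \<le> 1" "0 < margin k" "0 < delay_loss k" "delay_loss k < 1/2"
    "0 < pulls_min k" "gap k - 2 * margin k > 0" "0 \<le> \<theta> k" "\<theta> k \<le> 1"
proof -
  have tk: "0 \<le> \<theta> k" "\<theta> k \<le> 1" using theta_bounds k by auto
  have lt: "\<theta> k < \<theta> 1" using theta_1_max k by auto
  show gap_pos: "0 < gap k" using lt by (simp add: gap_def)
  show gap_le: "gap k \<le> 1" using tk theta1_bounds by (simp add: gap_def)
  show "0 < margin k" using gap_pos eps_pos by (simp add: margin_def)
  show loss_pos: "0 < delay_loss k" using gap_pos eps_pos by (simp add: delay_loss_def)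
  have "\<epsilon> * gap k \<le> 1 * 1" using gap_le eps_lt_1 eps_pos gap_pos by (intro mult_mono) auto
  then show "delay_loss k < 1/2" by (simp add: delay_loss_def)
  show "0 < pulls_min k" using loss_pos c_pos by (simp add: pulls_min_def)
  have "\<epsilon> * gap k < 4 * gap k" using eps_lt_1 gap_pos by (intro mult_strict_right_mono) auto
  then show "gap k - 2 * margin k > 0" by (simp add: margin_def)
  show "0 \<le> \<theta> k" "\<theta> k \<le> 1" by (fact tk)+
qed

lemma delay_loss_eq_margin: "delay_loss k = margin k / 4" by (simp add: delay_loss_def margin_def)

lemma margin_delay_loss_sq_ge:
  assumes k: "k \<in> {2..K}"
  shows "(1 - \<epsilon>) * (gap k)\<^sup>2 \<le> (gap k - 2 * margin k)\<^sup>2 * (1 - delay_loss k)\<^sup>2"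
proof -
  define q where "q = 1 - \<epsilon> / 4"
  have q: "0 < q" "q \<le> 1" using eps_pos eps_lt_1 by (auto simp: q_def)
  have "1 - \<epsilon> \<le> q ^ 4"
    using Bernoulli_inequality[of "- \<epsilon> / 4" 4] eps_pos eps_lt_1 by (simp add: q_def)
  have "\<epsilon> * gap k \<le> \<epsilon> * 1" using arm_params(2)[OF k] eps_pos by (intro mult_left_mono) auto
  then have "q \<le> 1 - delay_loss k" unfolding q_def delay_loss_def using eps_pos by linarith
  have "(1 - \<epsilon>) * (gap k)\<^sup>2 \<le> q ^ 4 * (gap k)\<^sup>2"
    using \<open>1 - \<epsilon> \<le> q ^ 4\<close> by (intro mult_right_mono) auto
  also have "\<dots> = (q * gap k)\<^sup>2 * q\<^sup>2" by (simp add: power2_eq_square power4_eq_xxxx)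
  also have "\<dots> \<le> (q * gap k)\<^sup>2 * (1 - delay_loss k)\<^sup>2"
    using \<open>q \<le> 1 - delay_loss k\<close> q by (intro mult_left_mono power_mono) auto
  also have "q * gap k = gap k - 2 * margin k" by (simp add: q_def margin_def algebra_simps)
  finally show ?thesis .
qed

lemma log_coeff_gap_le:
  assumes k: "k \<in> {2..K}"
  shows "log_coeff k * gap k \<le> (1 + \<epsilon>) / (1 - \<epsilon>) * (1 / (2 * gap k))"
proof -
  note P = arm_params[OF k]
  have pos: "0 < (gap k - 2 * margin k)\<^sup>2 * (1 - delay_loss k)\<^sup>2" using P by simp
  have "log_coeff k * gap k = (1 + \<epsilon>) * gap k / (2 * ((gap k - 2 * margin k)\<^sup>2 * (1 - delay_loss k)\<^sup>2))"
    by (simp add: log_coeff_def mult.assoc)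
  also have "\<dots> \<le> (1 + \<epsilon>) * gap k / (2 * ((1 - \<epsilon>) * (gap k)\<^sup>2))"
  proof (rule divide_left_mono)
    show "2 * ((1 - \<epsilon>) * (gap k)\<^sup>2) \<le> 2 * ((gap k - 2 * margin k)\<^sup>2 * (1 - delay_loss k)\<^sup>2)"
      using margin_delay_loss_sq_ge[OF k] by simp
    show "0 \<le> (1 + \<epsilon>) * gap k" using eps_pos P(1) by simp
    show "0 < 2 * ((gap k - 2 * margin k)\<^sup>2 * (1 - delay_loss k)\<^sup>2) * (2 * ((1 - \<epsilon>) * (gap k)\<^sup>2))"
      using pos eps_lt_1 P(1) by (intro mult_pos_pos) auto
  qed
  also have "\<dots> = (1 + \<epsilon>) / (1 - \<epsilon>) * (1 / (2 * gap k))"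
    using P eps_lt_1 by (simp add: power2_eq_square field_simps)
  finally show ?thesis .
qed

section \<open>Pulls of a suboptimal arm\<close>

lemma played_diag: "s \<le> T \<Longrightarrow> played \<omega> T s = played \<omega> s s"
  by (subst acts_eq_diag) simp

lemma pulls_played_diag: "s \<le> T \<Longrightarrow> pulls (played \<omega> s) k s = pulls (played \<omega> T) k s"
  by (rule pulls_cong) (metis less_imp_le order.trans played_diag)

lemma played_in_arms: "1 \<le> s \<Longrightarrow> played \<omega> s s \<in> {1..K}"
  using acts_in_arms[OF _ order_refl K_pos sel_in] by blast

lemma Ntil_ge_delay_loss:
  assumes k: "k \<in> {2..K}" and n: "real (pulls A k t) \<ge> pulls_min k"
  shows "Ntil Dd A k t \<ge> (1 - delay_loss k) * real (pulls A k t)"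
proof -
  note P = arm_params[OF k]
  define n where "n = real (pulls A k t)"
  have n_pos: "n > 0" using n P by (simp add: n_def)
  define M where "M = delay_loss k * n / 2"
  have M: "M > 0" using P n_pos by (simp add: M_def)
  have "4 * c / (delay_loss k)\<^sup>2 \<le> n" using n by (simp add: n_def pulls_min_def)
  then have "2 * c \<le> (delay_loss k * n / 2) * delay_loss k"
    using P by (simp add: pos_divide_le_eq power2_eq_square algebra_simps)
  then have "n * c / M \<le> delay_loss k * n / 2"
    using n_pos P by (simp add: M_def field_simps)
  then have "(1 - delay_loss k) * n \<le> n - M - n * c / M"
    by (simp add: M_def algebra_simps)
  also have "\<dots> \<le> Ntil Dd A k t"
    unfolding n_def by (rule Ntil_ge[OF tail M c_pos])
  finally show ?thesis by (simp add: n_def)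
qed

lemma Ntil_pos_of_pulls_ge:
  assumes k: "k \<in> {2..K}" and n: "real (pulls A k t) \<ge> pulls_min k"
  shows "Ntil Dd A k t > 0"
proof -
  have "0 < (1 - delay_loss k) * real (pulls A k t)"
    using arm_params[OF k] n by (intro mult_pos_pos) auto
  then show ?thesis using Ntil_ge_delay_loss[OF k n] by linarith
qed

definition ucb1_low :: "nat \<Rightarrow> outcome \<Rightarrow> nat \<Rightarrow> nat \<Rightarrow> bool" where
  "ucb1_low k \<omega> T t = (0 < Ntil Dd (played \<omega> T) 1 t \<and> UCB Dd \<beta> \<omega> (played \<omega> T) 1 t \<le> \<theta> 1 - margin k)"

lemma UCB_played_ge_UCB_1:
  assumes "K < t" "t \<le> T" and k: "played \<omega> T t = k" and pos: "Ntil Dd (played \<omega> T) k t > 0"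
  shows "0 < Ntil Dd (played \<omega> T) 1 t" "UCB Dd \<beta> \<omega> (played \<omega> T) 1 t \<le> UCB Dd \<beta> \<omega> (played \<omega> T) k t"
proof -
  have cand: "k \<in> candidates K Dd \<beta> \<omega> (played \<omega> T) t"
    using acts_in_candidates[OF assms(1,2) K_pos sel_in, where Dd=Dd and \<beta>=\<beta> and \<omega>=\<omega>] k by simp
  then have no_zero: "\<not> (\<exists>j\<in>{1..K}. Ntil Dd (played \<omega> T) j t = 0)"
    using pos unfolding candidates_def by (auto split: if_splits)
  then show "0 < Ntil Dd (played \<omega> T) 1 t"
    using K_pos Ntil_nonneg[of Dd "played \<omega> T" 1 t] by force
  show "UCB Dd \<beta> \<omega> (played \<omega> T) 1 t \<le> UCB Dd \<beta> \<omega> (played \<omega> T) k t"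
    using cand no_zero K_pos unfolding candidates_def by auto
qed

text \<open>When arm \<open>k\<close> is played although the index of arm 1 is not too low and the estimate of
  \<open>\<theta>\<^sub>k\<close> is not too high, the exploration bonus of \<open>k\<close> exceeds \<open>\<Delta>\<^sub>k - 2\<delta>\<^sub>k\<close>; this is only
  possible while \<open>k\<close> has been pulled fewer than \<open>log_coeff k * ln T\<close> times.\<close>

lemma pulls_lt_log_coeff:
  assumes k: "k \<in> {2..K}" and t: "t \<in> {1..T}" "K < t" and played: "played \<omega> T t = k"
    and n: "real (pulls (played \<omega> T) k t) \<ge> pulls_min k" and not_low: "\<not> ucb1_low k \<omega> T t"
    and estimate: "theta_hat Dd \<omega> (played \<omega> T) k t \<le> \<theta> k + margin k"
  shows "real (pulls (played \<omega> T) k t) < log_coeff k * ln (real T)"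
proof -
  note P = arm_params[OF k]
  define A where "A = played \<omega> T"
  define n where "n = real (pulls A k t)"
  define N where "N = Ntil Dd A k t"
  have N_pos: "N > 0" using Ntil_pos_of_pulls_ge[OF k n] by (simp add: N_def A_def)
  have n_pos: "n > 0" using n P by (simp add: n_def A_def)
  have \<beta>_nonneg: "\<beta> t \<ge> 0" using t eps_pos by auto
  have "UCB Dd \<beta> \<omega> A k t > \<theta> 1 - margin k"
    using UCB_played_ge_UCB_1[of t T \<omega> k] N_pos not_low t played
    by (fastforce simp: ucb1_low_def A_def N_def)
  then have "sqrt (n * \<beta> t / 2) / N > gap k - 2 * margin k"
    using estimate sqrt_bonus_eq[OF N_pos \<beta>_nonneg, of n]
    by (simp add: UCB_def gap_def A_def N_def n_def Ncnt_eq_pulls)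
  then have "n < \<beta> t / (2 * ((gap k - 2 * margin k)\<^sup>2 * (1 - delay_loss k)\<^sup>2))"
    using pulls_lt_of_bonus_gt[OF _ _ _ n_pos \<beta>_nonneg] Ntil_ge_delay_loss[OF k n] P
    by (simp add: N_def n_def A_def)
  also have "\<dots> \<le> (1 + \<epsilon>) * ln (real T) / (2 * ((gap k - 2 * margin k)\<^sup>2 * (1 - delay_loss k)\<^sup>2))"
    using t eps_pos P by (intro divide_right_mono mult_left_mono) auto
  finally show ?thesis by (simp add: log_coeff_def n_def A_def mult.commute mult.assoc)
qed

text \<open>\<open>coin_dev k n\<close> is the deviation from \<open>n \<theta>\<^sub>k\<close> of the first \<open>n\<close> conversions of arm \<open>k\<close>,
  whether observed yet or not.\<close>

definition pulled_below :: "nat \<Rightarrow> nat \<Rightarrow> nat \<Rightarrow> outcome \<Rightarrow> bool" where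
  "pulled_below k n s \<omega> = (played \<omega> s s = k \<and> pulls (played \<omega> s) k s < n)"

definition coin :: "nat \<Rightarrow> nat \<Rightarrow> (nat \<Rightarrow> bool) \<times> nat \<Rightarrow> real" where
  "coin k s r = (if fst r k then 1 else 0)"

definition coin_dev :: "nat \<Rightarrow> nat \<Rightarrow> nat \<Rightarrow> outcome \<Rightarrow> real" where
  "coin_dev k n T \<omega> = dev_sum (pulled_below k n) (coin k) (\<lambda>s. \<theta> k) T \<omega>"

lemma pulled_below_eq:
  "s \<le> T \<Longrightarrow> pulled_below k n s \<omega> = (played \<omega> T s = k \<and> pulls (played \<omega> T) k s < n)"
  unfolding pulled_below_def by (simp add: played_diag[of s T] pulls_played_diag)

lemma coin_dev_pulls_eq:
  fixes \<omega> :: outcome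
  assumes "t \<le> T"
  defines "A \<equiv> played \<omega> T"
  shows "coin_dev k (pulls A k t) T \<omega> =
    (\<Sum>s\<in>{s\<in>{1..<t}. A s = k}. coin k s (fst \<omega> s, snd \<omega> s)) - real (pulls A k t) * \<theta> k"
proof -
  have pulled: "pulled_below k (pulls A k t) s \<omega> = (A s = k \<and> pulls A k s < pulls A k t)"
    if "s \<in> {1..T}" for s
    unfolding A_def using that by (intro pulled_below_eq) simp
  have "coin_dev k (pulls A k t) T \<omega> = (\<Sum>s\<in>{1..T}.
      if A s = k \<and> pulls A k s < pulls A k t then coin k s (fst \<omega> s, snd \<omega> s) - \<theta> k else 0)"
    unfolding coin_dev_def dev_sum_def by (rule sum.cong[OF refl]) (simp add: pulled)
  also have "\<dots> = (\<Sum>s\<in>{s\<in>{1..T}. A s = k \<and> pulls A k s < pulls A k t}. coin k s (fst \<omega> s, snd \<omega> s) - \<theta> k)"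
    by (simp add: sum.If_cases Int_def)
  also have "{s\<in>{1..T}. A s = k \<and> pulls A k s < pulls A k t} = {s\<in>{1..<t}. A s = k}"
    using assms(1) by (rule rounds_pulls_below_eq)
  also have "(\<Sum>s\<in>{s\<in>{1..<t}. A s = k}. coin k s (fst \<omega> s, snd \<omega> s) - \<theta> k) =
      (\<Sum>s\<in>{s\<in>{1..<t}. A s = k}. coin k s (fst \<omega> s, snd \<omega> s)) - real (pulls A k t) * \<theta> k"
    by (simp add: sum_subtractf pulls_def)
  finally show ?thesis .
qed

lemma coin_dev_large_of_estimate_high:
  assumes k: "k \<in> {2..K}" and "t \<le> T"
    and n: "real (pulls (played \<omega> T) k t) \<ge> pulls_min k"
    and estimate: "theta_hat Dd \<omega> (played \<omega> T) k t > \<theta> k + margin k"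
  shows "coin_dev k (pulls (played \<omega> T) k t) T \<omega> \<ge> margin k * real (pulls (played \<omega> T) k t) / 4"
proof -
  note P = arm_params[OF k]
  define A where "A = played \<omega> T"
  define m where "m = real (pulls A k t)"
  have N_pos: "Ntil Dd A k t > 0" using Ntil_pos_of_pulls_ge[OF k n] by (simp add: A_def)
  have "Scnt \<omega> A k t = (\<Sum>s\<in>{s\<in>{1..<t}. A s = k}. Xobs \<omega> A s t)"
    unfolding Scnt_def by (simp add: sum.If_cases Int_Collect_atLeastLessThan)
  also have "\<dots> \<le> (\<Sum>s\<in>{s\<in>{1..<t}. A s = k}. coin k s (fst \<omega> s, snd \<omega> s))"
    by (intro sum_mono) (auto simp: Xobs_def Cval_def coin_def)
  finally have "Scnt \<omega> A k t - m * \<theta> k \<le> coin_dev k (pulls A k t) T \<omega>"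
    using coin_dev_pulls_eq[OF \<open>t \<le> T\<close>, where \<omega>=\<omega> and k=k] by (simp add: A_def m_def)
  moreover have "(\<theta> k + margin k) * ((1 - delay_loss k) * m) \<le> Scnt \<omega> A k t"
  proof -
    have "(\<theta> k + margin k) * ((1 - delay_loss k) * m) \<le> (\<theta> k + margin k) * Ntil Dd A k t"
      using Ntil_ge_delay_loss[OF k n] P by (intro mult_left_mono) (auto simp: A_def m_def)
    also have "\<dots> < Scnt \<omega> A k t"
      using estimate N_pos by (simp add: theta_hat_def A_def pos_less_divide_eq)
    finally show ?thesis by simp
  qed
  moreover have "margin k / 4 \<le> margin k - delay_loss k * (\<theta> k + margin k)"
  proof -
    have "margin k \<le> 1" using eps_pos eps_lt_1 P by (simp add: margin_def)
    then have "delay_loss k * (\<theta> k + margin k) \<le> delay_loss k * 2" using P by (intro mult_left_mono) auto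
    then show ?thesis using P by (simp add: delay_loss_eq_margin)
  qed
  then have "m * (margin k / 4) \<le> m * (margin k - delay_loss k * (\<theta> k + margin k))"
    by (rule mult_left_mono) (simp add: m_def)
  moreover have "(\<theta> k + margin k) * ((1 - delay_loss k) * m) - m * \<theta> k = m * (margin k - delay_loss k * (\<theta> k + margin k))"
    by (simp add: algebra_simps)
  moreover have "margin k * m / 4 = m * (margin k / 4)" by simp
  ultimately show ?thesis unfolding A_def m_def by linarith
qed

lemma log_coeff_nonneg: "log_coeff k \<ge> 0"
  using eps_pos by (simp add: log_coeff_def)

lemma ln_of_nat_nonneg: "ln (real (T::nat)) \<ge> 0"
  by (cases T) auto

definition estimate_high :: "nat \<Rightarrow> outcome \<Rightarrow> nat \<Rightarrow> nat \<Rightarrow> bool" where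
  "estimate_high k \<omega> T t = (played \<omega> T t = k \<and> real (pulls (played \<omega> T) k t) \<ge> pulls_min k
     \<and> theta_hat Dd \<omega> (played \<omega> T) k t > \<theta> k + margin k)"

lemma played_subset_bad_rounds:
  fixes T :: nat
  assumes k: "k \<in> {2..K}"
  defines "L \<equiv> pulls_min k + log_coeff k * ln (real T)"
  shows "{t\<in>{1..T}. played \<omega> T t = k} \<subseteq> {t\<in>{1..T}. t \<le> K}
    \<union> {t\<in>{1..T}. played \<omega> T t = k \<and> real (pulls (played \<omega> T) k t) < L}
    \<union> {t\<in>{1..T}. ucb1_low k \<omega> T t} \<union> {t\<in>{1..T}. estimate_high k \<omega> T t}"
proof
  fix t assume t: "t \<in> {t\<in>{1..T}. played \<omega> T t = k}"
  consider "t \<le> K" | "ucb1_low k \<omega> T t" | "estimate_high k \<omega> T t"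
    | "K < t" "\<not> ucb1_low k \<omega> T t" "real (pulls (played \<omega> T) k t) < pulls_min k"
    | "K < t" "\<not> ucb1_low k \<omega> T t" "real (pulls (played \<omega> T) k t) \<ge> pulls_min k"
      "\<not> theta_hat Dd \<omega> (played \<omega> T) k t > \<theta> k + margin k"
    using t unfolding estimate_high_def by fastforce
  then have "t \<le> K \<or> ucb1_low k \<omega> T t \<or> estimate_high k \<omega> T t \<or> real (pulls (played \<omega> T) k t) < L"
  proof cases
    case 4
    moreover have "pulls_min k \<le> L" using log_coeff_nonneg ln_of_nat_nonneg by (simp add: L_def)
    ultimately show ?thesis by linarith
  next
    case 5
    then have "real (pulls (played \<omega> T) k t) < log_coeff k * ln (real T)"
      using t by (intro pulls_lt_log_coeff[OF k]) auto
    then show ?thesis using arm_params(6)[OF k] by (simp add: L_def)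
  qed auto
  then show "t \<in> {t\<in>{1..T}. t \<le> K}
    \<union> {t\<in>{1..T}. played \<omega> T t = k \<and> real (pulls (played \<omega> T) k t) < L}
    \<union> {t\<in>{1..T}. ucb1_low k \<omega> T t} \<union> {t\<in>{1..T}. estimate_high k \<omega> T t}"
    using t by blast
qed

text \<open>Rounds with a too-high estimate are told apart by the pull count of \<open>k\<close>, and each count
  \<open>n\<close> reached there witnesses a large deviation of the first \<open>n\<close> coins of \<open>k\<close>.\<close>

lemma card_estimate_high_le:
  assumes k: "k \<in> {2..K}"
  shows "card {t\<in>{1..T}. estimate_high k \<omega> T t} \<le> card {n\<in>{1..T}. coin_dev k n T \<omega> \<ge> margin k * real n / 4}"
proof (rule card_inj_on_le)
  let ?A = "played \<omega> T"
  show "inj_on (pulls ?A k) {t\<in>{1..T}. estimate_high k \<omega> T t}"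
  proof (rule inj_onI, rule ccontr)
    fix x y assume "x \<in> {t\<in>{1..T}. estimate_high k \<omega> T t}" "y \<in> {t\<in>{1..T}. estimate_high k \<omega> T t}"
      and eq: "pulls ?A k x = pulls ?A k y" and "x \<noteq> y"
    then have "1 \<le> x" "1 \<le> y" "?A x = k" "?A y = k" by (auto simp: estimate_high_def)
    with \<open>x \<noteq> y\<close> eq show False
      using pulls_strict_mono[of x y ?A k] pulls_strict_mono[of y x ?A k] by linarith
  qed
  show "pulls ?A k ` {t\<in>{1..T}. estimate_high k \<omega> T t} \<subseteq> {n\<in>{1..T}. coin_dev k n T \<omega> \<ge> margin k * real n / 4}"
  proof (rule image_subsetI)
    fix t assume "t \<in> {t\<in>{1..T}. estimate_high k \<omega> T t}"
    then have t: "t \<in> {1..T}" "estimate_high k \<omega> T t" by auto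
    then have "real (pulls ?A k t) \<ge> pulls_min k" by (simp add: estimate_high_def)
    then have "1 \<le> pulls ?A k t" using arm_params(6)[OF k] by linarith
    moreover have "pulls ?A k t \<le> T" using pulls_le[of ?A k t] t by auto
    ultimately show "pulls ?A k t \<in> {n\<in>{1..T}. coin_dev k n T \<omega> \<ge> margin k * real n / 4}"
      using coin_dev_large_of_estimate_high[OF k] t by (auto simp: estimate_high_def)
  qed
qed simp

lemma card_pulls_le:
  assumes k: "k \<in> {2..K}"
  shows "real (card {t\<in>{1..T}. played \<omega> T t = k}) \<le> real K + (pulls_min k + log_coeff k * ln (real T) + 1)
     + real (card {t\<in>{1..T}. ucb1_low k \<omega> T t})
     + real (card {n\<in>{1..T}. coin_dev k n T \<omega> \<ge> margin k * real n / 4})"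
proof -
  define L where "L = pulls_min k + log_coeff k * ln (real T)"
  define S0 where "S0 = {t\<in>{1..T}. t \<le> K}"
  define S1 where "S1 = {t\<in>{1..T}. played \<omega> T t = k \<and> real (pulls (played \<omega> T) k t) < L}"
  define S2 where "S2 = {t\<in>{1..T}. ucb1_low k \<omega> T t}"
  define S3 where "S3 = {t\<in>{1..T}. estimate_high k \<omega> T t}"
  have "L \<ge> 0" using arm_params(6)[OF k] log_coeff_nonneg ln_of_nat_nonneg by (simp add: L_def)
  have "card {t\<in>{1..T}. played \<omega> T t = k} \<le> card (S0 \<union> S1 \<union> S2 \<union> S3)"
    using played_subset_bad_rounds[OF k, where T=T and \<omega>=\<omega>]
    unfolding S0_def S1_def S2_def S3_def L_def by (intro card_mono) auto
  also have "\<dots> \<le> card (S0 \<union> S1 \<union> S2) + card S3" by (rule card_Un_le)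
  also have "\<dots> \<le> card (S0 \<union> S1) + card S2 + card S3" using card_Un_le[of "S0 \<union> S1" S2] by simp
  also have "\<dots> \<le> card S0 + card S1 + card S2 + card S3" using card_Un_le[of S0 S1] by simp
  finally have "real (card {t\<in>{1..T}. played \<omega> T t = k})
      \<le> real (card S0) + real (card S1) + real (card S2) + real (card S3)"
    by (simp only: of_nat_add[symmetric] of_nat_le_iff)
  moreover have "card S0 \<le> card {1..K}"
    by (intro card_mono) (auto simp: S0_def)
  then have "real (card S0) \<le> real K" by simp
  moreover have "real (card S1) \<le> L + 1"
    unfolding S1_def by (rule card_pulls_below_real_le[OF \<open>L \<ge> 0\<close>])
  moreover have "card S3 \<le> card {n\<in>{1..T}. coin_dev k n T \<omega> \<ge> margin k * real n / 4}"
    unfolding S3_def by (rule card_estimate_high_le[OF k])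
  then have "real (card S3) \<le> real (card {n\<in>{1..T}. coin_dev k n T \<omega> \<ge> margin k * real n / 4})"
    by linarith
  ultimately show ?thesis unfolding L_def S2_def by linarith
qed

lemma played_set_round: "s \<le> m \<Longrightarrow> played (set_round \<omega> m r) s = played \<omega> s"
  by (rule acts_set_round)

section \<open>Large deviations of the coins of a suboptimal arm\<close>

lemma pulled_below_set_round: "s \<le> m \<Longrightarrow> pulled_below k n s (set_round \<omega> m r) = pulled_below k n s \<omega>"
  unfolding pulled_below_def by (simp add: played_set_round)

lemma coin_bounds: "0 \<le> coin k s r \<and> coin k s r \<le> 1"
  unfolding coin_def by auto

lemma expectation_coin: "k \<in> {2..K} \<Longrightarrow> \<theta> k = measure_pmf.expectation (round_pmf K \<theta> Dd) (coin k s)"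
  unfolding coin_def using expectation_round_coin[of k K \<theta> Dd] arm_params by auto

lemma active_count_pulled_below: "active_count (pulled_below k n) T \<omega> \<le> real n"
proof -
  have "{s\<in>{1..T}. pulled_below k n s \<omega>} = {s\<in>{1..T}. played \<omega> T s = k \<and> pulls (played \<omega> T) k s < n}"
    using pulled_below_eq[of _ T k n \<omega>] by auto
  then show ?thesis
    unfolding active_count_eq_card using card_pulls_below_le[of T "played \<omega> T" k n] by simp
qed

lemma prob_coin_dev_large:
  assumes k: "k \<in> {2..K}" and n: "n \<ge> 1"
  shows "measure_pmf.prob (omega_pmf K \<theta> Dd T) {\<omega>. coin_dev k n T \<omega> \<ge> margin k * real n / 4}
    \<le> exp (- (margin k)\<^sup>2 / 8) ^ n"
proof -
  have "measure_pmf.prob (omega_pmf K \<theta> Dd T) {\<omega>. coin_dev k n T \<omega> \<ge> margin k * real n / 4}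
     \<le> exp (- 2 * (margin k * real n / 4)\<^sup>2 / real n)"
    unfolding coin_dev_def
    by (rule dev_sum_tail_bound[where b="pulled_below k n" and \<phi>="coin k" and \<mu>="\<lambda>s. \<theta> k",
          OF coin_bounds pulled_below_set_round expectation_coin[OF k]])
       (use n arm_params(3)[OF k] active_count_pulled_below in auto)
  also have "- 2 * (margin k * real n / 4)\<^sup>2 / real n = real n * (- (margin k)\<^sup>2 / 8)"
    using n by (simp add: power2_eq_square field_simps)
  also have "exp (real n * (- (margin k)\<^sup>2 / 8)) = exp (- (margin k)\<^sup>2 / 8) ^ n"
    by (rule exp_of_nat_mult)
  finally show ?thesis .
qed

section \<open>Underestimation of the optimal arm\<close>

text \<open>On \<open>ucb1_low k\<close> at round \<open>t\<close>, with \<open>n\<close> pulls of arm 1 so far, the delay-weighted misses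
  \<open>1 - C\<^sub>s \<one>{D\<^sub>s \<le> t - s}\<close> of these \<open>n\<close> pulls exceed their means \<open>1 - \<theta>\<^sub>1 \<tau>\<^sub>t\<^sub>-\<^sub>s\<close> by
  \<open>opt_threshold k t n\<close>.\<close>

definition opt_active :: "nat \<Rightarrow> nat \<Rightarrow> nat \<Rightarrow> outcome \<Rightarrow> bool" where
  "opt_active t n s \<omega> = (s < t \<and> played \<omega> s s = 1 \<and> pulls (played \<omega> s) 1 s < n)"

definition opt_miss :: "nat \<Rightarrow> nat \<Rightarrow> (nat \<Rightarrow> bool) \<times> nat \<Rightarrow> real" where
  "opt_miss t s r = 1 - (if fst r 1 then 1 else 0) * (if snd r \<le> t - s then 1 else 0)"

definition opt_miss_mean :: "nat \<Rightarrow> nat \<Rightarrow> real" where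
  "opt_miss_mean t s = 1 - \<theta> 1 * tau Dd (t - s)"

definition opt_threshold :: "nat \<Rightarrow> nat \<Rightarrow> nat \<Rightarrow> real" where
  "opt_threshold k t n = sqrt (real n * \<beta> t / 2) + margin k * max 0 (real n / 2 - 2 * c)"

lemma opt_active_set_round: "s \<le> m \<Longrightarrow> opt_active t n s (set_round \<omega> m r) = opt_active t n s \<omega>"
  unfolding opt_active_def by (simp add: played_set_round)

lemma opt_miss_bounds: "0 \<le> opt_miss t s r \<and> opt_miss t s r \<le> 1"
  unfolding opt_miss_def by auto

lemma opt_miss_mean_eq: "opt_miss_mean t s = measure_pmf.expectation (round_pmf K \<theta> Dd) (opt_miss t s)"
proof -
  have "measure_pmf.expectation (round_pmf K \<theta> Dd) (opt_miss t s) =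
    1 - measure_pmf.expectation (round_pmf K \<theta> Dd)
      (\<lambda>r. (if fst r 1 then 1 else 0) * (if snd r \<le> t - s then 1 else 0) :: real)"
    unfolding opt_miss_def
    by (subst Bochner_Integration.integral_diff) (auto intro!: integrable_bounded_pmf[where B=1])
  also have "\<dots> = 1 - \<theta> 1 * tau Dd (t - s)"
    using K_pos theta1_bounds by (subst expectation_round_coin_delay) auto
  finally show ?thesis by (simp add: opt_miss_mean_def)
qed

lemma active_count_opt_active: "active_count (opt_active t n) T \<omega> \<le> real n"
proof -
  have "{s\<in>{1..T}. opt_active t n s \<omega>} \<subseteq> {s\<in>{1..T}. played \<omega> T s = 1 \<and> pulls (played \<omega> T) 1 s < n}"
    using pulled_below_eq[of _ T 1 n \<omega>] by (auto simp: opt_active_def pulled_below_def)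
  then have "card {s\<in>{1..T}. opt_active t n s \<omega>} \<le> card {s\<in>{1..T}. played \<omega> T s = 1 \<and> pulls (played \<omega> T) 1 s < n}"
    by (intro card_mono) auto
  then show ?thesis
    unfolding active_count_eq_card using card_pulls_below_le[of T "played \<omega> T" 1 n] by simp
qed

lemma ucb1_low_first: "\<not> ucb1_low k \<omega> T 1"
  by (simp add: ucb1_low_def Ntil_def)

lemma dev_sum_opt_miss_eq:
  fixes \<omega> :: outcome
  assumes "t \<le> T"
  defines "A \<equiv> played \<omega> T"
  shows "dev_sum (opt_active t (pulls A 1 t)) (opt_miss t) (opt_miss_mean t) T \<omega> =
    \<theta> 1 * Ntil Dd A 1 t - Scnt \<omega> A 1 t"
proof -
  let ?P = "{s\<in>{1..<t}. A s = 1}"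
  have active: "opt_active t (pulls A 1 t) s \<omega> = (s \<in> ?P)" if "s \<in> {1..T}" for s
  proof -
    have "played \<omega> s s = A s" "pulls (played \<omega> s) 1 s = pulls A 1 s"
      using that played_diag[of s T \<omega>] pulls_played_diag[of s T \<omega> 1] by (simp_all add: A_def)
    moreover have "s < t \<Longrightarrow> A s = 1 \<Longrightarrow> pulls A 1 s < pulls A 1 t"
      using that by (intro pulls_strict_mono) auto
    ultimately show ?thesis using that unfolding opt_active_def by auto
  qed
  have "?P \<subseteq> {1..T}" using assms(1) by auto
  have "dev_sum (opt_active t (pulls A 1 t)) (opt_miss t) (opt_miss_mean t) T \<omega>
      = (\<Sum>s\<in>{1..T}. if s \<in> ?P then opt_miss t s (fst \<omega> s, snd \<omega> s) - opt_miss_mean t s else 0)"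
    unfolding dev_sum_def by (rule sum.cong[OF refl], subst active) auto
  also have "\<dots> = (\<Sum>s\<in>?P. opt_miss t s (fst \<omega> s, snd \<omega> s) - opt_miss_mean t s)"
    by (subst sum.inter_restrict[symmetric])
       (simp_all only: finite_atLeastAtMost Int_absorb1[OF \<open>?P \<subseteq> {1..T}\<close>])
  also have "\<dots> = (\<Sum>s\<in>?P. \<theta> 1 * tau Dd (t - s) - Xobs \<omega> A s t)"
    by (intro sum.cong refl) (auto simp: opt_miss_def opt_miss_mean_def Xobs_def Cval_def)
  also have "\<dots> = \<theta> 1 * Ntil Dd A 1 t - Scnt \<omega> A 1 t"
    unfolding Ntil_def Scnt_def
    by (simp add: sum_subtractf sum_distrib_left sum.If_cases Int_Collect_atLeastLessThan)
  finally show ?thesis .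
qed

lemma ucb1_low_imp_dev:
  assumes k: "k \<in> {2..K}" and t: "t \<in> {1..T}" and low: "ucb1_low k \<omega> T t"
  shows "\<exists>n\<in>{1..T}. dev_sum (opt_active t n) (opt_miss t) (opt_miss_mean t) T \<omega> \<ge> opt_threshold k t n"
proof -
  define A where "A = played \<omega> T"
  define n where "n = pulls A 1 t"
  define N where "N = Ntil Dd A 1 t"
  have N_pos: "N > 0" and U: "UCB Dd \<beta> \<omega> A 1 t \<le> \<theta> 1 - margin k"
    using low by (auto simp: ucb1_low_def N_def A_def)
  have "n \<noteq> 0"
  proof
    assume "n = 0"
    then have "{s\<in>{1..<t}. A s = 1} = {}" by (simp add: n_def pulls_def)
    then show False using N_pos by (simp add: N_def Ntil_def sum.If_cases Int_Collect_atLeastLessThan)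
  qed
  have "n \<le> T" using pulls_le[of A 1 t] t by (auto simp: n_def)
  have "\<beta> t \<ge> 0" using t eps_pos by auto
  then have "(Scnt \<omega> A 1 t + sqrt (real n * \<beta> t / 2)) / N \<le> \<theta> 1 - margin k"
    using U sqrt_bonus_eq[OF N_pos, of "\<beta> t" "real n"]
    by (simp add: UCB_def theta_hat_def Ncnt_eq_pulls add_divide_distrib N_def n_def)
  then have "Scnt \<omega> A 1 t + sqrt (real n * \<beta> t / 2) \<le> (\<theta> 1 - margin k) * N"
    by (simp only: pos_divide_le_eq[OF N_pos])
  moreover have "(\<theta> 1 - margin k) * N = \<theta> 1 * N - margin k * N" by (simp add: left_diff_distrib)
  ultimately have "\<theta> 1 * N - Scnt \<omega> A 1 t \<ge> sqrt (real n * \<beta> t / 2) + margin k * N"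
    by linarith
  moreover have "N \<ge> real n - real n / 2 - real n * c / (real n / 2)"
    unfolding N_def n_def by (rule Ntil_ge[OF tail _ c_pos]) (use \<open>n \<noteq> 0\<close> n_def in simp)
  then have "N \<ge> max 0 (real n / 2 - 2 * c)"
    using N_pos \<open>n \<noteq> 0\<close> by simp
  then have "margin k * N \<ge> margin k * max 0 (real n / 2 - 2 * c)"
    using arm_params(3)[OF k] by (intro mult_left_mono) auto
  ultimately have "dev_sum (opt_active t n) (opt_miss t) (opt_miss_mean t) T \<omega> \<ge> opt_threshold k t n"
    using dev_sum_opt_miss_eq[of t T \<omega>] t unfolding opt_threshold_def by (simp add: A_def N_def n_def)
  then show ?thesis using \<open>n \<noteq> 0\<close> \<open>n \<le> T\<close> by auto
qed

lemma prob_ucb1_low_le: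
  assumes k: "k \<in> {2..K}" and t: "t \<in> {1..T}"
  shows "measure_pmf.prob (omega_pmf K \<theta> Dd T) {\<omega>. ucb1_low k \<omega> T t}
     \<le> (\<Sum>n\<in>{1..T}. exp (- 2 * (opt_threshold k t n)\<^sup>2 / real n))"
proof (cases "t = 1")
  case True
  then show ?thesis using ucb1_low_first[of k _ T] by (simp add: sum_nonneg)
next
  case False
  let ?M = "omega_pmf K \<theta> Dd T"
  let ?E = "\<lambda>n. {\<omega>. dev_sum (opt_active t n) (opt_miss t) (opt_miss_mean t) T \<omega> \<ge> opt_threshold k t n}"
  have "\<beta> t > 0" using t False eps_pos by simp
  have "measure_pmf.prob ?M {\<omega>. ucb1_low k \<omega> T t} \<le> measure_pmf.prob ?M (\<Union>n\<in>{1..T}. ?E n)"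
    using ucb1_low_imp_dev[OF k t] by (intro measure_pmf.finite_measure_mono) auto
  also have "\<dots> \<le> (\<Sum>n\<in>{1..T}. measure_pmf.prob ?M (?E n))"
    by (intro measure_pmf.finite_measure_subadditive_finite) auto
  also have "\<dots> \<le> (\<Sum>n\<in>{1..T}. exp (- 2 * (opt_threshold k t n)\<^sup>2 / real n))"
  proof (intro sum_mono)
    fix n assume n: "n \<in> {1..T}"
    have pos: "opt_threshold k t n > 0"
      unfolding opt_threshold_def using n \<open>\<beta> t > 0\<close> arm_params(3)[OF k]
      by (intro add_pos_nonneg) auto
    show "measure_pmf.prob ?M (?E n) \<le> exp (- 2 * (opt_threshold k t n)\<^sup>2 / real n)"
      by (rule dev_sum_tail_bound[OF opt_miss_bounds opt_active_set_round opt_miss_mean_eq pos])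
         (use n active_count_opt_active in auto)
  qed
  finally show ?thesis .
qed

end

lemma sum_power_le_geometric:
  fixes r :: real
  assumes "0 \<le> r" "r < 1"
  shows "(\<Sum>n\<in>{1..T}. r ^ n) \<le> 1 / (1 - r)"
proof -
  have "(\<Sum>n\<in>{1..T}. r ^ n) \<le> (\<Sum>n<Suc T. r ^ n)"
    by (intro sum_mono2) (use assms in auto)
  also have "\<dots> = (1 - r ^ Suc T) / (1 - r)" using assms by (subst sum_gp_strict) simp
  also have "\<dots> \<le> 1 / (1 - r)" using assms by (intro divide_right_mono) auto
  finally show ?thesis .
qed

lemma max0_sq_ge:
  fixes n c :: real
  assumes "n \<ge> 0" "c > 0"
  shows "(max 0 (n / 2 - 2 * c))\<^sup>2 \<ge> n\<^sup>2 / 8 - 4 * c\<^sup>2"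
proof (cases "n / 2 - 2 * c \<ge> 0")
  case True
  have "(n / 2 - 2 * c)\<^sup>2 = n\<^sup>2 / 8 - 4 * c\<^sup>2 + (n - 8 * c)\<^sup>2 / 8"
    by (simp add: power2_eq_square field_simps)
  then show ?thesis using True by simp
next
  case False
  then have "n * n \<le> (4 * c) * (4 * c)" using assms by (intro mult_mono) auto
  moreover have "0 \<le> c * c" by simp
  ultimately have "n\<^sup>2 / 8 - 4 * c\<^sup>2 \<le> 0" unfolding power2_eq_square by linarith
  then show ?thesis using False by simp
qed

context bandit begin

definition rate :: "nat \<Rightarrow> real" where "rate k = exp (- (margin k)\<^sup>2 / 4)"
definition const_exp :: "nat \<Rightarrow> real" where "const_exp k = exp (8 * (margin k)\<^sup>2 * c\<^sup>2)"

lemma opt_threshold_sq_ge: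
  assumes k: "k \<in> {2..K}" and t: "t \<ge> 1"
  shows "(opt_threshold k t n)\<^sup>2 \<ge> real n * \<beta> t / 2 + (margin k)\<^sup>2 * ((real n)\<^sup>2 / 8 - 4 * c\<^sup>2)"
proof -
  define a where "a = sqrt (real n * \<beta> t / 2)"
  define b where "b = margin k * max 0 (real n / 2 - 2 * c)"
  have "\<beta> t \<ge> 0" using t eps_pos by simp
  then have "a \<ge> 0" "a\<^sup>2 = real n * \<beta> t / 2" by (simp_all add: a_def)
  moreover have "b \<ge> 0" using arm_params(3)[OF k] by (simp add: b_def)
  moreover have "b\<^sup>2 \<ge> (margin k)\<^sup>2 * ((real n)\<^sup>2 / 8 - 4 * c\<^sup>2)"
    unfolding b_def power_mult_distrib using max0_sq_ge[of "real n" c] c_pos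
    by (intro mult_left_mono) auto
  moreover have "(a + b)\<^sup>2 = a\<^sup>2 + b\<^sup>2 + 2 * a * b" by (simp add: power2_eq_square algebra_simps)
  moreover have "0 \<le> 2 * a * b" using \<open>a \<ge> 0\<close> \<open>b \<ge> 0\<close> by simp
  ultimately show ?thesis unfolding opt_threshold_def a_def[symmetric] b_def[symmetric] by linarith
qed

text \<open>The \<open>\<beta>\<close>-part of the threshold yields the factor \<open>t\<^sup>-\<^sup>(\<^sup>1\<^sup>+\<^sup>\<epsilon>\<^sup>)\<close>, the \<open>\<delta>\<close>-part a geometric
  factor in \<open>n\<close>; together they are summable over \<open>t\<close> and \<open>n\<close>.\<close>

lemma exp_opt_threshold_le:
  assumes k: "k \<in> {2..K}" and t: "t \<ge> 1" and n: "n \<ge> 1"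
  shows "exp (- 2 * (opt_threshold k t n)\<^sup>2 / real n) \<le> real t powr (- (1 + \<epsilon>)) * const_exp k * rate k ^ n"
proof -
  have "\<beta> t + real n * ((margin k)\<^sup>2 / 4) - 8 * (margin k)\<^sup>2 * c\<^sup>2
      \<le> \<beta> t + real n * ((margin k)\<^sup>2 / 4) - 8 * (margin k)\<^sup>2 * c\<^sup>2 / real n"
    using divide_left_mono[of 1 "real n" "8 * (margin k)\<^sup>2 * c\<^sup>2"] n by simp
  also have "\<dots> = 2 * (real n * \<beta> t / 2 + (margin k)\<^sup>2 * ((real n)\<^sup>2 / 8 - 4 * c\<^sup>2)) / real n"
    using n by (simp add: field_simps power2_eq_square)
  also have "\<dots> \<le> 2 * (opt_threshold k t n)\<^sup>2 / real n"
    using opt_threshold_sq_ge[OF k t, of n] by (intro divide_right_mono) auto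
  finally have "- 2 * (opt_threshold k t n)\<^sup>2 / real n \<le> - \<beta> t + 8 * (margin k)\<^sup>2 * c\<^sup>2 + real n * (- (margin k)\<^sup>2 / 4)"
    by simp
  then have "exp (- 2 * (opt_threshold k t n)\<^sup>2 / real n)
      \<le> exp (- \<beta> t + 8 * (margin k)\<^sup>2 * c\<^sup>2 + real n * (- (margin k)\<^sup>2 / 4))"
    by simp
  also have "\<dots> = exp (- \<beta> t) * const_exp k * rate k ^ n"
    by (simp only: exp_add const_exp_def rate_def exp_of_nat_mult)
  also have "exp (- \<beta> t) = real t powr (- (1 + \<epsilon>))"
    using t by (simp add: powr_def algebra_simps)
  finally show ?thesis .
qed

definition zeta_eps :: real where "zeta_eps = (\<Sum>t. real t powr (- (1 + \<epsilon>)))"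

lemma sum_powr_le_zeta_eps: "(\<Sum>t\<in>{1..T}. real t powr (- (1 + \<epsilon>))) \<le> zeta_eps"
proof -
  have "summable (\<lambda>t::nat. real t powr (- (1 + \<epsilon>)))"
    using eps_pos by (subst summable_real_powr_iff) simp
  then show ?thesis unfolding zeta_eps_def by (rule sum_le_suminf) auto
qed

definition const_ucb1 :: "nat \<Rightarrow> real" where "const_ucb1 k = const_exp k * zeta_eps * (1 / (1 - rate k))"
definition const_coin :: "nat \<Rightarrow> real" where "const_coin k = 1 / (1 - exp (- (margin k)\<^sup>2 / 8))"

lemma card_le_horizon: "\<bar>real (card {t\<in>{1..T}. P t})\<bar> \<le> real T"
proof -
  have "card {t\<in>{1..T}. P t} \<le> card {1..T}" by (intro card_mono) auto
  then show ?thesis by simp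
qed

lemma expectation_card_ucb1_low_le:
  assumes k: "k \<in> {2..K}"
  shows "measure_pmf.expectation (omega_pmf K \<theta> Dd T) (\<lambda>\<omega>. real (card {t\<in>{1..T}. ucb1_low k \<omega> T t}))
    \<le> const_ucb1 k"
proof -
  have r: "0 \<le> rate k" "rate k < 1" using arm_params(3)[OF k] by (simp_all add: rate_def)
  have "measure_pmf.expectation (omega_pmf K \<theta> Dd T) (\<lambda>\<omega>. real (card {t\<in>{1..T}. ucb1_low k \<omega> T t}))
     = (\<Sum>t\<in>{1..T}. measure_pmf.prob (omega_pmf K \<theta> Dd T) {\<omega>. ucb1_low k \<omega> T t})"
    by (rule expectation_card_eq_sum_prob) simp
  also have "\<dots> \<le> (\<Sum>t\<in>{1..T}. \<Sum>n\<in>{1..T}. real t powr (- (1 + \<epsilon>)) * const_exp k * rate k ^ n)"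
  proof (intro sum_mono)
    fix t assume t: "t \<in> {1..T}"
    have "measure_pmf.prob (omega_pmf K \<theta> Dd T) {\<omega>. ucb1_low k \<omega> T t}
      \<le> (\<Sum>n\<in>{1..T}. exp (- 2 * (opt_threshold k t n)\<^sup>2 / real n))"
      by (rule prob_ucb1_low_le[OF k t])
    also have "\<dots> \<le> (\<Sum>n\<in>{1..T}. real t powr (- (1 + \<epsilon>)) * const_exp k * rate k ^ n)"
      by (intro sum_mono exp_opt_threshold_le[OF k]) (use t in auto)
    finally show "measure_pmf.prob (omega_pmf K \<theta> Dd T) {\<omega>. ucb1_low k \<omega> T t}
      \<le> (\<Sum>n\<in>{1..T}. real t powr (- (1 + \<epsilon>)) * const_exp k * rate k ^ n)" .
  qed
  also have "\<dots> = (\<Sum>t\<in>{1..T}. real t powr (- (1 + \<epsilon>))) * const_exp k * (\<Sum>n\<in>{1..T}. rate k ^ n)"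
    by (simp add: sum_distrib_left sum_distrib_right mult.assoc) (rule sum.swap)
  also have "\<dots> \<le> zeta_eps * const_exp k * (1 / (1 - rate k))"
  proof (intro mult_mono sum_powr_le_zeta_eps sum_power_le_geometric r)
    show "0 \<le> zeta_eps * const_exp k" using sum_powr_le_zeta_eps[of 0] by (simp add: const_exp_def)
    show "0 \<le> (\<Sum>n\<in>{1..T}. rate k ^ n)" using r by (intro sum_nonneg) auto
  qed (use sum_powr_le_zeta_eps[of 0] in \<open>simp_all add: const_exp_def\<close>)
  finally show ?thesis by (simp add: const_ucb1_def mult.commute mult.left_commute)
qed

lemma expectation_card_coin_dev_le:
  assumes k: "k \<in> {2..K}"
  shows "measure_pmf.expectation (omega_pmf K \<theta> Dd T)
      (\<lambda>\<omega>. real (card {n\<in>{1..T}. coin_dev k n T \<omega> \<ge> margin k * real n / 4})) \<le> const_coin k"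
proof -
  have "measure_pmf.expectation (omega_pmf K \<theta> Dd T)
      (\<lambda>\<omega>. real (card {n\<in>{1..T}. coin_dev k n T \<omega> \<ge> margin k * real n / 4}))
     = (\<Sum>n\<in>{1..T}. measure_pmf.prob (omega_pmf K \<theta> Dd T) {\<omega>. coin_dev k n T \<omega> \<ge> margin k * real n / 4})"
    by (rule expectation_card_eq_sum_prob) simp
  also have "\<dots> \<le> (\<Sum>n\<in>{1..T}. exp (- (margin k)\<^sup>2 / 8) ^ n)"
    by (intro sum_mono prob_coin_dev_large[OF k]) auto
  also have "\<dots> \<le> const_coin k" unfolding const_coin_def
    by (rule sum_power_le_geometric) (use arm_params(3)[OF k] in auto)
  finally show ?thesis .
qed

lemma expectation_pulls_le:
  assumes k: "k \<in> {2..K}"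
  shows "measure_pmf.expectation (omega_pmf K \<theta> Dd T) (\<lambda>\<omega>. real (card {t\<in>{1..T}. played \<omega> T t = k}))
    \<le> real K + (pulls_min k + log_coeff k * ln (real T) + 1) + const_ucb1 k + const_coin k"
proof -
  let ?M = "omega_pmf K \<theta> Dd T"
  let ?L = "real K + (pulls_min k + log_coeff k * ln (real T) + 1)"
  let ?f1 = "\<lambda>\<omega>. real (card {t\<in>{1..T}. ucb1_low k \<omega> T t})"
  let ?f2 = "\<lambda>\<omega>. real (card {n\<in>{1..T}. coin_dev k n T \<omega> \<ge> margin k * real n / 4})"
  have integrable: "integrable ?M (\<lambda>\<omega>. real (card {t\<in>{1..T}. P t \<omega>}))" for P
    by (rule integrable_bounded_pmf[where B="real T"]) (rule card_le_horizon)
  have "measure_pmf.expectation ?M (\<lambda>\<omega>. real (card {t\<in>{1..T}. played \<omega> T t = k}))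
     \<le> measure_pmf.expectation ?M (\<lambda>\<omega>. ?L + ?f1 \<omega> + ?f2 \<omega>)"
    by (intro integral_mono integrable Bochner_Integration.integrable_add measure_pmf.integrable_const
        card_pulls_le[OF k])
  also have "\<dots> = ?L + measure_pmf.expectation ?M ?f1 + measure_pmf.expectation ?M ?f2"
    using integrable by simp
  also have "\<dots> \<le> ?L + const_ucb1 k + const_coin k"
    using expectation_card_ucb1_low_le[OF k, of T] expectation_card_coin_dev_le[OF k, of T] by linarith
  finally show ?thesis .
qed

end

section \<open>The regret decomposition\<close>

lemma reward_eq_observed: "reward \<omega> A T = (\<Sum>s\<in>{1..T}. Xobs \<omega> A s T)"
proof (induction T)
  case (Suc T)
  have "(\<Sum>s\<in>{1..T}. Xobs \<omega> A s (Suc T)) =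
    (\<Sum>s\<in>{1..T}. Xobs \<omega> A s T + Cval \<omega> A s * (if snd \<omega> s = Suc T - s then 1 else 0))"
  proof (intro sum.cong refl)
    fix s assume "s \<in> {1..T}"
    then have "Suc T - s = Suc (T - s)" by auto
    then show "Xobs \<omega> A s (Suc T) = Xobs \<omega> A s T + Cval \<omega> A s * (if snd \<omega> s = Suc T - s then 1 else 0)"
      by (auto simp: Xobs_def le_Suc_eq)
  qed
  then show ?case
    using Suc.IH by (simp add: reward_def Yrew_def Xobs_def sum.distrib)
qed (simp add: reward_def)

context bandit begin

definition round_regret :: "nat \<Rightarrow> nat \<Rightarrow> outcome \<Rightarrow> real" where
  "round_regret T s \<omega> = ((if fst \<omega> s 1 then 1 else 0) - (if fst \<omega> s (played \<omega> s s) then 1 else 0))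
     * (if snd \<omega> s \<le> T - s then 1 else 0)"

lemma round_regret_bound: "\<bar>round_regret T s \<omega>\<bar> \<le> 1"
  unfolding round_regret_def by auto

lemma gap_bounds:
  assumes "k \<in> {1..K}" shows "0 \<le> gap k \<and> gap k \<le> 1"
proof (cases "k = 1")
  case False
  with assms have "k \<in> {2..K}" by auto
  then show ?thesis using arm_params(1,2) less_imp_le by blast
qed (simp add: gap_def)

lemma gap_played_bounds:
  assumes "1 \<le> s" shows "0 \<le> gap (played \<omega> s s) \<and> gap (played \<omega> s s) \<le> 1"
proof -
  have "played \<omega> s s \<in> {1..K}" using assms by (rule played_in_arms)
  then show ?thesis by (rule gap_bounds)
qed

lemma regret_eq_sum:
  "regret K \<theta> Dd \<beta> sel T = (\<Sum>s\<in>{1..T}. measure_pmf.expectation (omega_pmf K \<theta> Dd T) (round_regret T s))"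
proof -
  have "Xobs \<omega> (\<lambda>_. 1) s T - Xobs \<omega> (played \<omega> T) s T = round_regret T s \<omega>" if "s \<in> {1..T}" for \<omega> s
    using played_diag[of s T \<omega>] that by (simp add: round_regret_def Xobs_def Cval_def left_diff_distrib)
  then have "reward \<omega> (\<lambda>_. 1) T - reward \<omega> (played \<omega> T) T = (\<Sum>s\<in>{1..T}. round_regret T s \<omega>)" for \<omega>
    unfolding reward_eq_observed sum_subtractf[symmetric] by (intro sum.cong refl)
  then show ?thesis unfolding regret_def
    by (simp add: Bochner_Integration.integral_sum integrable_bounded_pmf[OF round_regret_bound])
qed

lemma expectation_round_regret_cond:
  assumes "1 \<le> s"
  shows "measure_pmf.expectation (round_pmf K \<theta> Dd) (\<lambda>r. round_regret T s (set_round \<omega> s r))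
    = gap (played \<omega> s s) * tau Dd (T - s)"
proof -
  define a where "a = played \<omega> s s"
  have a: "a \<in> {1..K}" "0 \<le> \<theta> a" "\<theta> a \<le> 1"
    using played_in_arms[OF assms] theta_bounds by (auto simp: a_def)
  have "(\<lambda>r. round_regret T s (set_round \<omega> s r)) = (\<lambda>r.
      (if fst r 1 then 1 else 0) * (if snd r \<le> T - s then 1 else 0)
      - (if fst r a then 1 else 0) * (if snd r \<le> T - s then 1 else 0) :: real)"
    unfolding round_regret_def played_set_round[OF order_refl]
    by (auto simp: a_def set_round_def left_diff_distrib)
  then have "measure_pmf.expectation (round_pmf K \<theta> Dd) (\<lambda>r. round_regret T s (set_round \<omega> s r))
      = \<theta> 1 * tau Dd (T - s) - \<theta> a * tau Dd (T - s)"
    using K_pos theta1_bounds a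
    by (simp add: Bochner_Integration.integral_diff integrable_bounded_pmf[where B=1] expectation_round_coin_delay)
  then show ?thesis by (simp add: gap_def a_def left_diff_distrib)
qed

text \<open>Conditionally on the first \<open>s - 1\<close> rounds, the regret of round \<open>s\<close> has mean
  \<open>\<Delta>\<^bsub>A\<^sub>s\<^esub> \<tau>\<^bsub>T-s\<^esub> \<le> \<Delta>\<^bsub>A\<^sub>s\<^esub>\<close>.\<close>

lemma expectation_round_regret_le:
  assumes s: "s \<in> {1..T}"
  shows "measure_pmf.expectation (omega_pmf K \<theta> Dd T) (round_regret T s)
    \<le> measure_pmf.expectation (omega_pmf K \<theta> Dd T) (\<lambda>\<omega>. gap (played \<omega> s s))"
proof -
  obtain s' where s': "s = Suc s'" using s by (cases s) auto
  have gap_bound: "\<bar>gap (played \<omega> s s)\<bar> \<le> 1" for \<omega> using gap_played_bounds[of s \<omega>] s by auto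
  have gap_local: "gap (played (set_round \<omega> (Suc m) r) s s) = gap (played \<omega> s s)" if "s' \<le> m" for \<omega> m r
    using that s' by (subst played_set_round) auto
  have regret_local: "round_regret T s (set_round \<omega> (Suc m) r) = round_regret T s \<omega>" if "s \<le> m" for \<omega> m r
  proof -
    have "played (set_round \<omega> (Suc m) r) s = played \<omega> s" using that by (intro played_set_round) simp
    then show ?thesis using that unfolding round_regret_def by (simp add: set_round_def)
  qed
  have "measure_pmf.expectation (omega_pmf K \<theta> Dd T) (round_regret T s)
      = measure_pmf.expectation (omega_pmf K \<theta> Dd s) (round_regret T s)"
    using s by (intro expectation_omega_pmf_prefix[OF regret_local round_regret_bound]) auto
  also have "\<dots> = measure_pmf.expectation (omega_pmf K \<theta> Dd s')
      (\<lambda>\<omega>. gap (played \<omega> s s) * tau Dd (T - s))"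
    unfolding s' expectation_omega_pmf_Suc[OF round_regret_bound]
    using expectation_round_regret_cond[of s] s' by simp
  also have "\<dots> \<le> measure_pmf.expectation (omega_pmf K \<theta> Dd s') (\<lambda>\<omega>. gap (played \<omega> s s))"
    using gap_played_bounds[of s] s tau_nonneg tau_le_1
    by (intro integral_mono integrable_bounded_pmf[where B=1])
       (auto simp: abs_mult intro!: mult_le_one mult_left_le)
  also have "\<dots> = measure_pmf.expectation (omega_pmf K \<theta> Dd T) (\<lambda>\<omega>. gap (played \<omega> s s))"
    using s s' by (intro expectation_omega_pmf_prefix[OF gap_local gap_bound, symmetric]) auto
  finally show ?thesis .
qed

lemma sum_gap_played:
  "(\<Sum>s\<in>{1..T}. gap (played \<omega> s s)) = (\<Sum>k\<in>{2..K}. gap k * real (card {t\<in>{1..T}. played \<omega> T t = k}))"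
proof -
  have "gap (played \<omega> s s) = (\<Sum>k\<in>{2..K}. gap k * (if played \<omega> T s = k then 1 else 0))" if "s \<in> {1..T}" for s
  proof -
    have "played \<omega> T s \<in> {1..K}" "played \<omega> T s = played \<omega> s s"
      using that played_in_arms[of s \<omega>] played_diag[of s T \<omega>] by auto
    then show ?thesis
      by (cases "played \<omega> T s = 1") (auto simp: gap_def if_distrib sum.delta cong: if_cong)
  qed
  then have "(\<Sum>s\<in>{1..T}. gap (played \<omega> s s))
      = (\<Sum>s\<in>{1..T}. \<Sum>k\<in>{2..K}. gap k * (if played \<omega> T s = k then 1 else 0))"
    by (rule sum.cong[OF refl])
  also have "\<dots> = (\<Sum>k\<in>{2..K}. \<Sum>s\<in>{1..T}. gap k * (if played \<omega> T s = k then 1 else 0))"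
    by (rule sum.swap)
  also have "\<dots> = (\<Sum>k\<in>{2..K}. gap k * real (card {t\<in>{1..T}. played \<omega> T t = k}))"
    by (simp add: sum_distrib_left[symmetric] sum.If_cases Int_def)
  finally show ?thesis .
qed

lemma regret_le_pulls:
  "regret K \<theta> Dd \<beta> sel T \<le> (\<Sum>k\<in>{2..K}.
     gap k * measure_pmf.expectation (omega_pmf K \<theta> Dd T) (\<lambda>\<omega>. real (card {t\<in>{1..T}. played \<omega> T t = k})))"
proof -
  let ?M = "omega_pmf K \<theta> Dd T"
  have integrable: "integrable ?M (\<lambda>\<omega>. gap (played \<omega> s s))" if "1 \<le> s" for s
    using gap_played_bounds[OF that] by (intro integrable_bounded_pmf[where B=1]) auto
  have "regret K \<theta> Dd \<beta> sel T \<le> (\<Sum>s\<in>{1..T}. measure_pmf.expectation ?M (\<lambda>\<omega>. gap (played \<omega> s s)))"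
    unfolding regret_eq_sum by (intro sum_mono expectation_round_regret_le)
  also have "\<dots> = measure_pmf.expectation ?M (\<lambda>\<omega>. \<Sum>s\<in>{1..T}. gap (played \<omega> s s))"
    by (rule Bochner_Integration.integral_sum[symmetric]) (use integrable in auto)
  also have "\<dots> = measure_pmf.expectation ?M (\<lambda>\<omega>. \<Sum>k\<in>{2..K}. gap k * real (card {t\<in>{1..T}. played \<omega> T t = k}))"
    by (simp only: sum_gap_played)
  also have "\<dots> = (\<Sum>k\<in>{2..K}. measure_pmf.expectation ?M (\<lambda>\<omega>. gap k * real (card {t\<in>{1..T}. played \<omega> T t = k})))"
    by (intro Bochner_Integration.integral_sum integrable_mult_right integrable_bounded_pmf[OF card_le_horizon])
  also have "\<dots> = (\<Sum>k\<in>{2..K}. gap k * measure_pmf.expectation ?M (\<lambda>\<omega>. real (card {t\<in>{1..T}. played \<omega> T t = k})))"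
    by (simp only: integral_mult_right_zero)
  finally show ?thesis .
qed

definition const_regret :: real where
  "const_regret = (\<Sum>k\<in>{2..K}. gap k * (real K + pulls_min k + 1 + const_ucb1 k + const_coin k))"

lemma regret_bound:
  "regret K \<theta> Dd \<beta> sel T \<le>
     (1 + \<epsilon>) / (1 - \<epsilon>) * ln (real T) * (\<Sum>k\<in>{2..K}. 1 / (2 * (\<theta> 1 - \<theta> k))) + const_regret"
proof -
  have "regret K \<theta> Dd \<beta> sel T
      \<le> (\<Sum>k\<in>{2..K}. gap k * (real K + (pulls_min k + log_coeff k * ln (real T) + 1) + const_ucb1 k + const_coin k))"
    using regret_le_pulls
    by (rule order.trans) (intro sum_mono mult_left_mono expectation_pulls_le, auto simp: gap_bounds)
  also have "\<dots> = (\<Sum>k\<in>{2..K}. (log_coeff k * gap k) * ln (real T)) + const_regret"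
    by (simp add: const_regret_def sum.distrib[symmetric] algebra_simps)
  also have "\<dots> \<le> (\<Sum>k\<in>{2..K}. ((1 + \<epsilon>) / (1 - \<epsilon>) * (1 / (2 * gap k))) * ln (real T)) + const_regret"
    by (intro add_right_mono sum_mono mult_right_mono log_coeff_gap_le ln_of_nat_nonneg)
  also have "\<dots> = (1 + \<epsilon>) / (1 - \<epsilon>) * ln (real T) * (\<Sum>k\<in>{2..K}. 1 / (2 * (\<theta> 1 - \<theta> k))) + const_regret"
    by (simp add: sum_distrib_left sum_distrib_right gap_def algebra_simps)
  finally show ?thesis .
qed

end

theorem corollary10:
  fixes K :: nat and \<theta> :: "nat \<Rightarrow> real" and Dd :: "nat pmf" and c \<epsilon> :: real
    and sel :: "nat \<Rightarrow> (nat \<Rightarrow> nat) \<Rightarrow> (nat \<Rightarrow> real) \<Rightarrow> nat set \<Rightarrow> nat"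
  assumes "K \<ge> 1"
    and "\<forall>k\<in>{1..K}. 0 \<le> \<theta> k \<and> \<theta> k \<le> 1"
    and "\<forall>k\<in>{2..K}. \<theta> k < \<theta> 1"
    and "c > 0"
    and "\<forall>m::nat. m \<ge> 1 \<longrightarrow> 1 - tau Dd m \<le> c / real m"
    and "0 < \<epsilon>" and "\<epsilon> < 1"
    and "\<forall>t H X S. S \<noteq> {} \<longrightarrow> sel t H X S \<in> S"
  shows "\<exists>g :: nat \<Rightarrow> real.
           ((\<lambda>T. g T / ln (real T)) \<longlongrightarrow> 0) sequentially \<and>
           (\<forall>T. regret K \<theta> Dd (\<lambda>t. (1 + \<epsilon>) * ln (real t)) sel T
                \<le> (1 + \<epsilon>) / (1 - \<epsilon>) * ln (real T) * (\<Sum>k\<in>{2..K}. 1 / (2 * (\<theta> 1 - \<theta> k))) + g T)"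
proof -
  interpret bandit K \<theta> Dd c \<epsilon> sel
    by unfold_locales (use assms in auto)
  have "filterlim (\<lambda>T::nat. ln (real T)) at_infinity sequentially"
    using filterlim_compose[OF ln_at_top filterlim_real_sequentially]
    by (rule filterlim_at_top_imp_at_infinity)
  then have "((\<lambda>T. const_regret / ln (real T)) \<longlongrightarrow> 0) sequentially"
    by (rule tendsto_divide_0[OF tendsto_const])
  with regret_bound show ?thesis
    by (intro exI[where x="\<lambda>_. const_regret"]) auto
qed

end
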